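(* Let $\lambda_0 \in \mathbb{D}\setminus\{0\}$ and let $y^0=(y_1^0,\dots,y_{n-1}^0,q^0)\in \mathcal J_n \subseteq \widetilde{\mathbb G}_n$. Then the following conditions are equivalent: (1) there exists an analytic function $\psi:\mathbb{D}\to \widetilde{\mathbb G}_n$ such that $\psi(0)=(0,\dots,0)$ and $\psi(\lambda_0)=y^0$; (2) $\max_{1\le j\le n-1} \|\Phi_j(\cdot,y^0)\|_{H^\infty}\le |\lambda_0|$; (3) for each $j=1,\dots,[n/2]$: $\|\Phi_j(\cdot,y^0)\|_{H^\infty}\le|\lambda_0|$ if $|y^0_{n-j}|\le|y^0_j|$, and $\|\Phi_{n-j}(\cdot,y^0)\|_{H^\infty}\le|\lambda_0|$ if $|y^0_j|\le|y^0_{n-j}|$; (4) for each $j=1,\dots,[n/2]$: $\dfrac{\binom nj|y^0_j-\overline{y^0_{n-j}}q^0|+|y^0_jy^0_{n-j}-\binom nj^2q^0|}{\binom nj^2-|y^0_{n-j}|^2}\le|\lambda_0|$ if $|y^0_{n-j}|\le|y^0_j|$, and $\dfrac{\binom nj|y^0_{n-j}-\overline{y^0_j}q^0|+|y^0_jy^0_{n-j}-\binom nj^2q^0|}{\binom nj^2-|y^0_j|^2}\le|\lambda_0|$ if $|y^0_j|\le|y^0_{n-j}|$; (5) for each $j=1,\dots,[n/2]$: $\binom nj\lambda_0-y^0_jz-y^0_{n-j}\lambda_0w+\binom nj q^0zw\neq0$ for all $z,w\in\mathbb{D}$ if $|y^0_{n-j}|\le|y^0_j|$, and $\binom nj\lambda_0-y^0_{n-j}z-y^0_j\lambda_0w+\binom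 nj q^0zw\neq0$ for all $z,w\in\mathbb{D}$ if $|y^0_j|\le|y^0_{n-j}|$; (6) $|q^0|\le|\lambda_0|$ and for each $j=1,\dots,[n/2]$: $|y^0_j|^2+|\lambda_0|^2|y^0_{n-j}|^2-\binom nj^2|q^0|^2+2|\lambda_0||y^0_jy^0_{n-j}-\binom nj^2q^0|\le\binom nj^2|\lambda_0|^2$ if $|y^0_{n-j}|\le|y^0_j|$, and the same with $y^0_j$ and $y^0_{n-j}$ interchanged if $|y^0_j|\le|y^0_{n-j}|$; (7) for each $j=1,\dots,[n/2]$: $\big||\lambda_0|^2y^0_{n-j}-\overline{y^0_j}q^0\big|+|\lambda_0||y^0_j-\overline{y^0_{n-j}}q^0|+\binom nj|q^0|^2\le\binom nj|\lambda_0|^2$ if $|y^0_{n-j}|\le|y^0_j|$, and the same with $y^0_j$ and $y^0_{n-j}$ interchanged if $|y^0_j|\le|y^0_{n-j}|$. In particular, since $\mathcal J_n=\widetilde{\mathbb G}_n$ for $n=1,2,3$, these conditions are equivalent for every $y^0\in\widetilde{\mathbb G}_n$ when $n\le 3$.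
   Context: $\mathbb{D}$ is the open unit disc. The extended symmetrized polydisc is $\widetilde{\mathbb G}_n=\{(y_1,\dots,y_{n-1},q)\in\mathbb C^n: q\in\mathbb{D},\ y_j=\beta_j+\bar\beta_{n-j}q,\ \beta_j\in\mathbb C,\ |\beta_j|+|\beta_{n-j}|<\binom nj,\ j=1,\dots,n-1\}$. For $y=(y_1,\dots,y_{n-1},q)$ and $z\in\mathbb C$, $\Phi_j(z,y)=\dfrac{\binom nj qz-y_j}{y_{n-j}z-\binom nj}$ (and $\Phi_j(z,y)=y_j/\binom nj$ if $y_jy_{n-j}=\binom nj^2q$), and $\|\Phi_j(\cdot,y)\|_{H^\infty}=\sup_{z\in\mathbb{D}}|\Phi_j(z,y)|$. For $n$ odd, $\mathcal J_n=\{y\in\widetilde{\mathbb G}_n: y_j=\frac{\binom nj}{n}y_1,\ y_{n-j}=\frac{\binom nj}{n}y_{n-1},\ j=2,\dots,[n/2]\}$; for $n$ even, $\mathcal J_n=\{y\in\widetilde{\mathbb G}_n: y_{[n/2]}=\frac{\binom n{[n/2]}}{n}\frac{y_1+y_{n-1}}2,\ y_j=\frac{\binom nj}{n}y_1,\ y_{n-j}=\frac{\binom nj}{n}y_{n-1},\ j=2,\dots,[n/2]-1\}$. $[x]$ denotes the integer part. *)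

theory Defs
  imports "HOL-Complex_Analysis.Complex_Analysis"
begin

text \<open>A point of C^n is represented as p :: nat => complex, with coordinates
  p 1, ..., p (n-1) being y_1,...,y_{n-1} and p n being q.
  Only the coordinates 1..n are meaningful.\<close>

abbreviation bc :: "nat \<Rightarrow> nat \<Rightarrow> complex" where
  "bc n j \<equiv> of_nat (n choose j)"

definition tG :: "nat \<Rightarrow> (nat \<Rightarrow> complex) \<Rightarrow> bool" where
  "tG n p \<longleftrightarrow> norm (p n) < 1 \<and>
     (\<exists>\<beta> :: nat \<Rightarrow> complex. \<forall>j\<in>{1..n-1}.
        p j = \<beta> j + cnj (\<beta> (n - j)) * p n \<and>
        norm (\<beta> j) + norm (\<beta> (n - j)) < real (n choose j))"

definition Jn :: "nat \<Rightarrow> (nat \<Rightarrow> complex) \<Rightarrow> bool" where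
  "Jn n p \<longleftrightarrow> tG n p \<and>
     (if odd n then
        (\<forall>j\<in>{2..n div 2}. p j = bc n j / of_nat n * p 1 \<and>
                          p (n - j) = bc n j / of_nat n * p (n - 1))
      else
        p (n div 2) = bc n (n div 2) / of_nat n * ((p 1 + p (n - 1)) / 2) \<and>
        (\<forall>j\<in>{2..n div 2 - 1}. p j = bc n j / of_nat n * p 1 \<and>
                          p (n - j) = bc n j / of_nat n * p (n - 1)))"

definition Phi :: "nat \<Rightarrow> nat \<Rightarrow> (nat \<Rightarrow> complex) \<Rightarrow> complex \<Rightarrow> complex" where
  "Phi n j p z =
     (if p j * p (n - j) = (bc n j)\<^sup>2 * p n then p j / bc n j
      else (bc n j * p n * z - p j) / (p (n - j) * z - bc n j))"

definition Hinf_Phi :: "nat \<Rightarrow> nat \<Rightarrow> (nat \<Rightarrow> complex) \<Rightarrow> real" where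
  "Hinf_Phi n j p = (SUP z\<in>ball 0 1. norm (Phi n j p z))"

end

theory Submission
  imports Defs
begin

text \<open>
  A point y of the extended symmetrized polydisc is described by the n - 1 points
  (y_j / C(n,j), y_(n-j) / C(n,j), q) of the tetrablock E, and Phi_j(., y) is the function
  Psi(., x) of E at the j-th of them. Writing Psi(., x) as an affine function of a disc
  automorphism gives the closed form (|x1 - cnj x2 x3| + |x1 x2 - x3|) / (1 - |x2|^2) for its
  H-infinity norm. Composing an analytic disc through 0 and y with Psi(., w) and applying the
  Schwarz lemma shows that condition (1) implies (2). Conversely, on J_n all these tetrablock
  points come from the single point (y_1 / n, y_(n-1) / n, q) through a linear embedding of E;
  when both Psi-norms at that point are at most |lambda0|, an explicit rational map admitting a
  contractive 2 x 2 realisation is an analytic disc in E through 0 and that point, and the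
  embedding lifts it to the extended symmetrized polydisc. Conditions (3) to (7) are elementary
  reformulations of Psi-norm <= |lambda0|, in which only the coordinate of larger modulus of
  each pair matters because its Psi-norm dominates the other one.
\<close>

section \<open>Moebius maps and affine functions on the disc\<close>

lemmas cnj_simps = complex_cnj_diff complex_cnj_mult complex_cnj_cnj complex_cnj_add
  complex_cnj_complex_of_real complex_cnj_one complex_cnj_zero complex_cnj_power complex_cnj_minus

lemma norm_one_minus_mult_sq:
  "(cmod (1 - a * z))\<^sup>2 = (cmod (z - cnj a))\<^sup>2 + (1 - (cmod z)\<^sup>2) * (1 - (cmod a)\<^sup>2)"
  by (rule of_real_eq_iff[where 'a = complex, THEN iffD1])
    (simp only: of_real_add of_real_diff of_real_mult of_real_1 complex_norm_square cnj_simps, algebra)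

lemma norm_diff_cnj_le:
  assumes "cmod z \<le> 1" "cmod a \<le> 1"
  shows "cmod (z - cnj a) \<le> cmod (1 - a * z)"
proof -
  have "0 \<le> (1 - (cmod z)\<^sup>2) * (1 - (cmod a)\<^sup>2)"
    using assms by (intro mult_nonneg_nonneg) (auto simp: power_le_one abs_square_le_1)
  then have "(cmod (z - cnj a))\<^sup>2 \<le> (cmod (1 - a * z))\<^sup>2"
    using norm_one_minus_mult_sq[of a z] by linarith
  then show ?thesis by (rule power2_le_imp_le) simp
qed

lemma one_minus_mult_nonzero:
  assumes "cmod a < 1" "cmod z \<le> 1"
  shows "1 - a * z \<noteq> 0"
proof
  assume "1 - a * z = 0"
  then have "cmod a * cmod z = 1" by (metis eq_iff_diff_eq_0 norm_mult norm_one)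
  moreover have "cmod a * cmod z \<le> cmod a"
    using assms(2) by (simp add: mult_left_le)
  ultimately show False using assms(1) by linarith
qed

lemma mobius_closed_ball:
  assumes a: "cmod a < 1" and u: "cmod u \<le> 1"
  shows "cmod ((u + cnj a) / (1 + a * u)) \<le> 1"
    and "cmod u < 1 \<Longrightarrow> cmod ((u + cnj a) / (1 + a * u)) < 1"
proof -
  have nz: "1 + a * u \<noteq> 0"
    using one_minus_mult_nonzero[of a "- u"] assms by simp
  have "- u - cnj a = - (u + cnj a)" by simp
  then have "cmod (- u - cnj a) = cmod (u + cnj a)" by (simp only: norm_minus_cancel)
  moreover have "1 - a * - u = 1 + a * u" by simp
  ultimately have id: "(cmod (1 + a * u))\<^sup>2 = (cmod (u + cnj a))\<^sup>2 + (1 - (cmod u)\<^sup>2) * (1 - (cmod a)\<^sup>2)"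
    using norm_one_minus_mult_sq[of a "- u"] by (simp only: norm_minus_cancel)
  have a2: "(cmod a)\<^sup>2 < 1" using a by (simp add: abs_square_less_1)
  have "(cmod u)\<^sup>2 \<le> 1" using u by (simp add: abs_square_le_1)
  then have "0 \<le> (1 - (cmod u)\<^sup>2) * (1 - (cmod a)\<^sup>2)"
    using a2 by (intro mult_nonneg_nonneg) linarith+
  then have "(cmod (u + cnj a))\<^sup>2 \<le> (cmod (1 + a * u))\<^sup>2" using id by linarith
  then have "cmod (u + cnj a) \<le> cmod (1 + a * u)" by (rule power2_le_imp_le) simp
  then show "cmod ((u + cnj a) / (1 + a * u)) \<le> 1"
    using nz by (simp add: norm_divide divide_le_eq_1)
  assume "cmod u < 1"
  then have "(cmod u)\<^sup>2 < 1" by (simp add: abs_square_less_1)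
  then have "0 < (1 - (cmod u)\<^sup>2) * (1 - (cmod a)\<^sup>2)"
    using a2 by (intro mult_pos_pos) linarith+
  then have "(cmod (u + cnj a))\<^sup>2 < (cmod (1 + a * u))\<^sup>2" using id by linarith
  then have "cmod (u + cnj a) < cmod (1 + a * u)" by (rule power2_less_imp_less) simp
  then show "cmod ((u + cnj a) / (1 + a * u)) < 1"
    using nz by (simp add: norm_divide divide_less_eq_1)
qed

lemma exists_aligning_unit:
  fixes a b :: complex
  shows "\<exists>\<omega>. cmod \<omega> = 1 \<and> (\<forall>\<rho>\<ge>0. cmod (a + b * (of_real \<rho> * \<omega>)) = cmod a + \<rho> * cmod b)"
proof -
  have polar: "\<exists>\<sigma>. cmod \<sigma> = 1 \<and> c = of_real (cmod c) * \<sigma>" for c :: complex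
  proof (cases "c = 0")
    case False
    then show ?thesis
      by (intro exI[of _ "c / of_real (cmod c)"]) (simp add: norm_divide)
  qed (auto intro: exI[of _ 1])
  obtain \<sigma> \<tau> where \<sigma>: "cmod \<sigma> = 1" "a = of_real (cmod a) * \<sigma>"
    and \<tau>: "cmod \<tau> = 1" "b = of_real (cmod b) * \<tau>"
    using polar by metis
  have "\<tau> * cnj \<tau> = 1" using \<tau>(1) complex_norm_square[of \<tau>] by simp
  then have "a + b * (of_real \<rho> * (\<sigma> * cnj \<tau>)) = of_real (cmod a + \<rho> * cmod b) * \<sigma>" for \<rho>
    by (subst \<sigma>(2), subst \<tau>(2)) (simp add: algebra_simps)
  then have "cmod (a + b * (of_real \<rho> * (\<sigma> * cnj \<tau>))) = \<bar>cmod a + \<rho> * cmod b\<bar>" for \<rho>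
    using \<sigma>(1) by (simp only: norm_mult norm_of_real) simp
  then show ?thesis
    using \<sigma>(1) \<tau>(1) by (intro exI[of _ "\<sigma> * cnj \<tau>"]) (simp add: norm_mult)
qed

lemma SUP_norm_affine_ball:
  fixes a b :: complex
  shows "(SUP u\<in>ball 0 1. cmod (a + b * u)) = cmod a + cmod b"
proof (rule antisym)
  have bound: "cmod (a + b * u) \<le> cmod a + cmod b" if "u \<in> ball 0 1" for u
  proof -
    have "cmod (a + b * u) \<le> cmod a + cmod b * cmod u"
      by (metis norm_mult norm_triangle_ineq)
    also have "\<dots> \<le> cmod a + cmod b" using that by (simp add: mult_left_le)
    finally show ?thesis .
  qed
  then show "(SUP u\<in>ball 0 1. cmod (a + b * u)) \<le> cmod a + cmod b"
    by (intro cSUP_least) auto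
  have bdd: "bdd_above ((\<lambda>u. cmod (a + b * u)) ` ball 0 1)"
    using bound by (intro bdd_aboveI) blast
  obtain \<omega> where \<omega>: "cmod \<omega> = 1" "\<And>\<rho>. \<rho> \<ge> 0 \<Longrightarrow> cmod (a + b * (of_real \<rho> * \<omega>)) = cmod a + \<rho> * cmod b"
    using exists_aligning_unit[of a b] by blast
  show "cmod a + cmod b \<le> (SUP u\<in>ball 0 1. cmod (a + b * u))"
  proof (rule field_le_mult_one_interval)
    fix \<rho> :: real assume \<rho>: "0 < \<rho>" "\<rho> < 1"
    have "\<rho> * (cmod a + cmod b) \<le> cmod (a + b * (of_real \<rho> * \<omega>))"
      using \<omega>(2) \<rho> by (simp add: distrib_left mult_left_le_one_le)
    also have "\<dots> \<le> (SUP u\<in>ball 0 1. cmod (a + b * u))"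
      using \<rho> \<omega>(1) by (intro cSUP_upper bdd) (simp add: norm_mult)
    finally show "\<rho> * (cmod a + cmod b) \<le> (SUP u\<in>ball 0 1. cmod (a + b * u))" .
  qed
qed

section \<open>The function Psi and its supremum norm\<close>

definition Psi :: "complex \<Rightarrow> complex \<Rightarrow> complex \<Rightarrow> complex \<Rightarrow> complex" where
  "Psi x1 x2 x3 z = (x1 - x3 * z) / (1 - x2 * z)"

definition Psi_norm :: "complex \<Rightarrow> complex \<Rightarrow> complex \<Rightarrow> real" where
  "Psi_norm x1 x2 x3 = (cmod (x1 - cnj x2 * x3) + cmod (x1 * x2 - x3)) / (1 - (cmod x2)\<^sup>2)"

lemma Psi_numerator_decomp:
  "of_real (1 - (cmod x2)\<^sup>2) * (x1 - x3 * z)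
     = (x1 - cnj x2 * x3) * (1 - x2 * z) + (x1 * x2 - x3) * (z - cnj x2)"
  by (simp only: of_real_diff of_real_1 complex_norm_square) algebra

lemma x3_decomp:
  "of_real (1 - (cmod x2)\<^sup>2) * x3 = (x1 - cnj x2 * x3) * x2 - (x1 * x2 - x3)"
  by (simp only: of_real_diff of_real_1 complex_norm_square) algebra

lemma Psi_norm_eq_norm_divide:
  assumes "cmod x2 < 1"
  shows "Psi_norm x1 x2 x3 = cmod ((x1 - cnj x2 * x3) / of_real (1 - (cmod x2)\<^sup>2))
                            + cmod ((x1 * x2 - x3) / of_real (1 - (cmod x2)\<^sup>2))"
proof -
  have "0 < 1 - (cmod x2)\<^sup>2" using assms by (simp add: abs_square_less_1)
  then show ?thesis by (simp only: Psi_norm_def norm_divide norm_of_real abs_of_pos add_divide_distrib)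
qed

lemma norm_Psi_numerator_le:
  assumes x2: "cmod x2 < 1" and z: "cmod z \<le> 1"
  shows "cmod (x1 - x3 * z) \<le> Psi_norm x1 x2 x3 * cmod (1 - x2 * z)"
proof -
  define v where "v = 1 - (cmod x2)\<^sup>2"
  have v: "0 < v" using x2 by (simp add: v_def abs_square_less_1)
  have "v * cmod (x1 - x3 * z) = cmod (of_real v * (x1 - x3 * z))"
    using v by (simp add: norm_mult)
  also have "\<dots> \<le> cmod (x1 - cnj x2 * x3) * cmod (1 - x2 * z) + cmod (x1 * x2 - x3) * cmod (z - cnj x2)"
    unfolding v_def Psi_numerator_decomp by (metis norm_mult norm_triangle_ineq)
  also have "\<dots> \<le> (cmod (x1 - cnj x2 * x3) + cmod (x1 * x2 - x3)) * cmod (1 - x2 * z)"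
    using norm_diff_cnj_le[OF z] x2 by (simp add: distrib_right mult_left_mono)
  also have "\<dots> = v * (Psi_norm x1 x2 x3 * cmod (1 - x2 * z))"
    using v by (simp add: Psi_norm_def v_def)
  finally show ?thesis using v by simp
qed

lemma norm_Psi_le:
  assumes "cmod x2 < 1" "cmod z \<le> 1"
  shows "cmod (Psi x1 x2 x3 z) \<le> Psi_norm x1 x2 x3"
proof -
  have "0 < cmod (1 - x2 * z)" using one_minus_mult_nonzero[OF assms] by simp
  then show ?thesis
    using norm_Psi_numerator_le[OF assms] by (simp add: Psi_def norm_divide divide_le_eq)
qed

lemma norm_x3_le_Psi_norm:
  assumes x2: "cmod x2 < 1"
  shows "cmod x3 \<le> Psi_norm x1 x2 x3"
proof -
  define v where "v = 1 - (cmod x2)\<^sup>2"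
  have v: "0 < v" using x2 by (simp add: v_def abs_square_less_1)
  have "v * cmod x3 = cmod ((x1 - cnj x2 * x3) * x2 - (x1 * x2 - x3))"
    using v x3_decomp[of x2 x3 x1] by (metis v_def abs_of_pos norm_mult norm_of_real)
  also have "\<dots> \<le> cmod (x1 - cnj x2 * x3) * cmod x2 + cmod (x1 * x2 - x3)"
    by (metis norm_mult norm_triangle_ineq4)
  also have "\<dots> \<le> cmod (x1 - cnj x2 * x3) + cmod (x1 * x2 - x3)"
    using x2 by (simp add: mult_left_le)
  finally show ?thesis using v by (simp add: Psi_norm_def v_def pos_le_divide_eq mult.commute)
qed

lemma Psi_mobius:
  assumes x2: "cmod x2 < 1" and u: "cmod u \<le> 1"
  defines "z \<equiv> (u + cnj x2) / (1 + x2 * u)"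
  shows "Psi x1 x2 x3 z = ((x1 - cnj x2 * x3) + (x1 * x2 - x3) * u) / of_real (1 - (cmod x2)\<^sup>2)"
proof -
  have nz: "1 + x2 * u \<noteq> 0" using one_minus_mult_nonzero[of x2 "- u"] x2 u by simp
  then have "z * (1 + x2 * u) = u + cnj x2" by (simp add: z_def)
  then have zu: "z - cnj x2 = u * (1 - x2 * z)" by algebra
  have nz1: "1 - x2 * z \<noteq> 0"
    using one_minus_mult_nonzero[OF x2 mobius_closed_ball(1)[OF x2 u]] by (simp add: z_def)
  have "0 < 1 - (cmod x2)\<^sup>2" using x2 by (simp add: abs_square_less_1)
  then have nzv: "(of_real (1 - (cmod x2)\<^sup>2) :: complex) \<noteq> 0" by (metis of_real_eq_0_iff order_less_irrefl)
  have "of_real (1 - (cmod x2)\<^sup>2) * (x1 - x3 * z)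
      = ((x1 - cnj x2 * x3) + (x1 * x2 - x3) * u) * (1 - x2 * z)"
    unfolding Psi_numerator_decomp zu by algebra
  then have "(x1 - x3 * z) * of_real (1 - (cmod x2)\<^sup>2)
      = ((x1 - cnj x2 * x3) + (x1 * x2 - x3) * u) * (1 - x2 * z)"
    by (simp only: mult.commute)
  then show ?thesis by (simp only: Psi_def frac_eq_eq[OF nz1 nzv])
qed

text \<open>By \<open>Psi_mobius\<close>, \<open>Psi x1 x2 x3\<close> is an affine function of the disc automorphism
  \<open>z \<mapsto> (z - cnj x2) / (1 - x2 * z)\<close>, so its supremum is that of \<open>a + b * u\<close> over the disc.\<close>

lemma SUP_norm_Psi:
  assumes x2: "cmod x2 < 1"
  shows "(SUP z\<in>ball 0 1. cmod (Psi x1 x2 x3 z)) = Psi_norm x1 x2 x3"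
proof (rule antisym)
  show "(SUP z\<in>ball 0 1. cmod (Psi x1 x2 x3 z)) \<le> Psi_norm x1 x2 x3"
    using norm_Psi_le[OF x2] by (intro cSUP_least) (auto simp: less_imp_le)
  define v :: complex where "v = of_real (1 - (cmod x2)\<^sup>2)"
  have bdd: "bdd_above ((\<lambda>z. cmod (Psi x1 x2 x3 z)) ` ball 0 1)"
    using norm_Psi_le[OF x2] by (intro bdd_aboveI[where M = "Psi_norm x1 x2 x3"]) (auto simp: less_imp_le)
  have "Psi_norm x1 x2 x3 = (SUP u\<in>ball 0 1. cmod ((x1 - cnj x2 * x3) / v + (x1 * x2 - x3) / v * u))"
    unfolding Psi_norm_eq_norm_divide[OF x2] v_def by (rule SUP_norm_affine_ball[symmetric])
  also have "\<dots> \<le> (SUP z\<in>ball 0 1. cmod (Psi x1 x2 x3 z))"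
  proof (rule cSUP_mono[OF _ bdd])
    fix u :: complex assume "u \<in> ball 0 1"
    then have u: "cmod u < 1" by simp
    then have "(u + cnj x2) / (1 + x2 * u) \<in> ball 0 1"
      using mobius_closed_ball(2)[OF x2] by simp
    moreover have "(x1 - cnj x2 * x3) / v + (x1 * x2 - x3) / v * u = Psi x1 x2 x3 ((u + cnj x2) / (1 + x2 * u))"
      using Psi_mobius[OF x2, of u] u by (simp add: v_def add_divide_distrib)
    ultimately show "\<exists>z\<in>ball 0 1. cmod ((x1 - cnj x2 * x3) / v + (x1 * x2 - x3) / v * u) \<le> cmod (Psi x1 x2 x3 z)"
      by auto
  qed simp
  finally show "Psi_norm x1 x2 x3 \<le> (SUP z\<in>ball 0 1. cmod (Psi x1 x2 x3 z))" .
qed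

lemma less_Psi_norm_imp:
  assumes "cmod x2 < 1" "t < Psi_norm x1 x2 x3"
  shows "\<exists>z\<in>ball 0 1. t < cmod (Psi x1 x2 x3 z)"
proof -
  have "bdd_above ((\<lambda>z. cmod (Psi x1 x2 x3 z)) ` ball 0 1)"
    using norm_Psi_le[OF assms(1)] by (intro bdd_aboveI[where M = "Psi_norm x1 x2 x3"]) (auto simp: less_imp_le)
  then show ?thesis
    using assms less_cSUP_iff[of "ball 0 1" "\<lambda>z. cmod (Psi x1 x2 x3 z)" t]
    by (simp add: SUP_norm_Psi)
qed

lemma Psi_norm_attained:
  assumes x2: "cmod x2 < 1"
  shows "\<exists>z. cmod z \<le> 1 \<and> cmod (Psi x1 x2 x3 z) = Psi_norm x1 x2 x3"
proof -
  define v :: complex where "v = of_real (1 - (cmod x2)\<^sup>2)"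
  define a b where "a = (x1 - cnj x2 * x3) / v" and "b = (x1 * x2 - x3) / v"
  obtain \<omega> where \<omega>: "cmod \<omega> = 1" "\<forall>\<rho>\<ge>0. cmod (a + b * (of_real \<rho> * \<omega>)) = cmod a + \<rho> * cmod b"
    using exists_aligning_unit by blast
  have "Psi x1 x2 x3 ((\<omega> + cnj x2) / (1 + x2 * \<omega>)) = a + b * \<omega>"
    using Psi_mobius[OF x2, of \<omega>] \<omega>(1) by (simp add: a_def b_def v_def add_divide_distrib)
  also have "cmod (a + b * \<omega>) = Psi_norm x1 x2 x3"
    using \<omega>(2)[rule_format, of 1] by (simp add: Psi_norm_eq_norm_divide[OF x2] a_def b_def v_def)
  moreover have "cmod ((\<omega> + cnj x2) / (1 + x2 * \<omega>)) \<le> 1"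
    using mobius_closed_ball(1)[OF x2] \<omega>(1) by simp
  ultimately show ?thesis by metis
qed

section \<open>The tetrablock\<close>

definition tetrablock :: "complex \<Rightarrow> complex \<Rightarrow> complex \<Rightarrow> bool" where
  "tetrablock x1 x2 x3 \<longleftrightarrow>
     cmod x3 < 1 \<and> cmod (x1 - cnj x2 * x3) + cmod (x2 - cnj x1 * x3) < 1 - (cmod x3)\<^sup>2"

lemma tetrablock_commute: "tetrablock x1 x2 x3 \<longleftrightarrow> tetrablock x2 x1 x3"
  unfolding tetrablock_def by (auto simp: add.commute)

lemma tetrablock_norm_x3: "tetrablock x1 x2 x3 \<Longrightarrow> cmod x3 < 1"
  by (simp add: tetrablock_def)

lemma tetrablock_divide_iff:
  assumes "N > 0"
  shows "tetrablock (a / of_nat N) (b / of_nat N) q \<longleftrightarrow>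
     cmod q < 1 \<and> cmod (a - cnj b * q) + cmod (b - cnj a * q) < real N * (1 - (cmod q)\<^sup>2)"
proof -
  have "a / of_nat N - cnj (b / of_nat N) * q = (a - cnj b * q) / of_nat N"
    "b / of_nat N - cnj (a / of_nat N) * q = (b - cnj a * q) / of_nat N"
    by (simp_all add: diff_divide_distrib)
  then show ?thesis
    using assms by (simp add: tetrablock_def norm_divide add_divide_distrib[symmetric] divide_less_eq mult.commute)
qed

lemma beta_coords_diff:
  assumes "x1 = \<beta>1 + cnj \<beta>2 * x3" "x2 = \<beta>2 + cnj \<beta>1 * x3"
  shows "x1 - cnj x2 * x3 = \<beta>1 * of_real (1 - (cmod x3)\<^sup>2)"
  unfolding assms by (simp only: cnj_simps of_real_diff of_real_1 complex_norm_square) algebra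

lemma beta_coords_exist:
  assumes "cmod x3 < 1"
  defines "w \<equiv> of_real (1 - (cmod x3)\<^sup>2) :: complex"
  shows "x1 = (x1 - cnj x2 * x3) / w + cnj ((x2 - cnj x1 * x3) / w) * x3"
proof -
  have "0 < 1 - (cmod x3)\<^sup>2" using assms by (simp add: abs_square_less_1)
  then have nz: "w \<noteq> 0" unfolding w_def by (metis of_real_eq_0_iff order_less_irrefl)
  have cw: "cnj w = w" by (simp add: w_def)
  have "w * ((x1 - cnj x2 * x3) / w + cnj ((x2 - cnj x1 * x3) / w) * x3)
      = (x1 - cnj x2 * x3) + cnj (x2 - cnj x1 * x3) * x3"
    using nz by (simp add: cw distrib_left)
  also have "\<dots> = w * x1"
    unfolding w_def by (simp only: cnj_simps of_real_diff of_real_1 complex_norm_square) algebra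
  finally show ?thesis using nz by simp
qed

lemma tetrablock_beta_coords:
  assumes "tetrablock x1 x2 x3"
  obtains \<beta>1 \<beta>2 where "x1 = \<beta>1 + cnj \<beta>2 * x3" "x2 = \<beta>2 + cnj \<beta>1 * x3" "cmod \<beta>1 + cmod \<beta>2 < 1"
proof -
  have x3: "cmod x3 < 1" and w0: "0 < 1 - (cmod x3)\<^sup>2"
    using assms by (simp_all add: tetrablock_def abs_square_less_1)
  define w :: complex where "w = of_real (1 - (cmod x3)\<^sup>2)"
  have "cmod ((x1 - cnj x2 * x3) / w) + cmod ((x2 - cnj x1 * x3) / w)
      = (cmod (x1 - cnj x2 * x3) + cmod (x2 - cnj x1 * x3)) / (1 - (cmod x3)\<^sup>2)"
    using w0 by (simp only: w_def norm_divide norm_of_real abs_of_pos add_divide_distrib)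
  also have "\<dots> < 1" using assms w0 by (simp add: tetrablock_def)
  finally show thesis
    using beta_coords_exist[OF x3, of x1 x2] beta_coords_exist[OF x3, of x2 x1] that
    unfolding w_def by blast
qed

lemma tetrablock_norm_x1:
  assumes "tetrablock x1 x2 x3"
  shows "cmod x1 < 1"
proof -
  obtain \<beta>1 \<beta>2 where x1: "x1 = \<beta>1 + cnj \<beta>2 * x3" and \<beta>: "cmod \<beta>1 + cmod \<beta>2 < 1"
    using tetrablock_beta_coords[OF assms] by metis
  have "cmod x1 \<le> cmod \<beta>1 + cmod \<beta>2 * cmod x3"
    unfolding x1 by (metis complex_mod_cnj norm_mult norm_triangle_ineq)
  also have "\<dots> \<le> cmod \<beta>1 + cmod \<beta>2"
    using tetrablock_norm_x3[OF assms] by (simp add: mult_left_le)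
  finally show ?thesis using \<beta> by linarith
qed

lemma tetrablock_norm_x2: "tetrablock x1 x2 x3 \<Longrightarrow> cmod x2 < 1"
  using tetrablock_norm_x1 tetrablock_commute by blast

lemma norm_diff_cnj_sq_via_product:
  "(cmod (x1 - cnj x2 * x3))\<^sup>2
     = (cmod (x1 * x2 - x3))\<^sup>2 + (1 - (cmod x2)\<^sup>2) * ((cmod x1)\<^sup>2 - (cmod x3)\<^sup>2)"
  by (rule of_real_eq_iff[where 'a = complex, THEN iffD1])
    (simp only: of_real_add of_real_diff of_real_mult of_real_1 complex_norm_square cnj_simps, algebra)

lemma norm_diff_cnj_sq_via_swap:
  "(cmod (x1 - cnj x2 * x3))\<^sup>2
     = (cmod (x2 - cnj x1 * x3))\<^sup>2 + (1 - (cmod x3)\<^sup>2) * ((cmod x1)\<^sup>2 - (cmod x2)\<^sup>2)"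
  by (rule of_real_eq_iff[where 'a = complex, THEN iffD1])
    (simp only: of_real_add of_real_diff of_real_mult of_real_1 complex_norm_square cnj_simps, algebra)

lemma norm_scaled_diff_cnj_sq:
  "(cmod (of_real (r\<^sup>2) * x2 - cnj x1 * x3))\<^sup>2
     = r\<^sup>2 * (cmod (x1 - cnj x2 * x3))\<^sup>2 + ((cmod x1)\<^sup>2 - r\<^sup>2 * (cmod x2)\<^sup>2) * ((cmod x3)\<^sup>2 - r\<^sup>2)"
  by (rule of_real_eq_iff[where 'a = complex, THEN iffD1])
    (simp only: of_real_add of_real_diff of_real_mult of_real_1 complex_norm_square cnj_simps, algebra)

lemma tetrablock_norm_diff_less:
  assumes "tetrablock x1 x2 x3"
  shows "cmod (x1 - cnj x2 * x3) < 1 - (cmod x2)\<^sup>2"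
proof -
  obtain \<beta>1 \<beta>2 where x1: "x1 = \<beta>1 + cnj \<beta>2 * x3" and x2: "x2 = \<beta>2 + cnj \<beta>1 * x3"
    and \<beta>: "cmod \<beta>1 + cmod \<beta>2 < 1"
    using tetrablock_beta_coords[OF assms] by metis
  define B e w where "B = cmod \<beta>1" and "e = 1 - cmod x3" and "w = 1 - (cmod x3)\<^sup>2"
  have x3: "cmod x3 < 1" using tetrablock_norm_x3[OF assms] .
  then have w0: "0 < 1 - (cmod x3)\<^sup>2" by (simp add: abs_square_less_1)
  have g: "cmod (x1 - cnj x2 * x3) = B * w"
    unfolding beta_coords_diff[OF x1 x2] norm_mult norm_of_real abs_of_pos[OF w0] B_def w_def ..
  have "cmod x2 \<le> cmod \<beta>2 + B * cmod x3"
    unfolding x2 B_def by (metis complex_mod_cnj norm_mult norm_triangle_ineq)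
  then have "cmod x2 < 1 - B * e" using \<beta> by (simp add: B_def e_def algebra_simps)
  then have "(cmod x2)\<^sup>2 < (1 - B * e)\<^sup>2" by (intro power_strict_mono) auto
  moreover have "B \<le> 1" unfolding B_def using \<beta> norm_ge_zero[of \<beta>2] by linarith
  then have "B * e\<^sup>2 * (1 - B) \<ge> 0" by (simp add: B_def)
  then have "B * w \<le> 1 - (1 - B * e)\<^sup>2"
    by (simp add: w_def e_def power2_eq_square algebra_simps)
  ultimately show ?thesis using g by linarith
qed

lemma add_less_iff_of_sq_eq:
  fixes g d v Y :: real
  assumes "0 \<le> g" "0 \<le> d" "0 < v" and eq: "g\<^sup>2 = d\<^sup>2 + v * Y"
  shows "g + d < v \<longleftrightarrow> g < v \<and> 2 * g < v + Y"
proof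
  assume h: "g + d < v"
  then have "d\<^sup>2 < (v - g)\<^sup>2" using assms by (intro power_strict_mono) auto
  then have "v * (2 * g) < v * (v + Y)" using eq by (simp add: power2_eq_square algebra_simps)
  then show "g < v \<and> 2 * g < v + Y" using h assms by simp
next
  assume h: "g < v \<and> 2 * g < v + Y"
  then have "v * (2 * g) < v * (v + Y)" using assms by simp
  then have "d\<^sup>2 < (v - g)\<^sup>2" using eq by (simp add: power2_eq_square algebra_simps)
  then have "d < v - g" by (rule power2_less_imp_less) (use h in auto)
  then show "g + d < v" by linarith
qed

lemma tetrablock_Psi_norm_less_1:
  assumes "tetrablock x1 x2 x3"
  shows "Psi_norm x1 x2 x3 < 1"
proof -
  have v: "0 < 1 - (cmod x2)\<^sup>2" using tetrablock_norm_x2[OF assms] by (simp add: abs_square_less_1)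
  have w: "0 < 1 - (cmod x3)\<^sup>2" using tetrablock_norm_x3[OF assms] by (simp add: abs_square_less_1)
  have "cmod (x1 - cnj x2 * x3) + cmod (x2 - cnj x1 * x3) < 1 - (cmod x3)\<^sup>2"
    using assms by (simp add: tetrablock_def)
  then have "2 * cmod (x1 - cnj x2 * x3) < (1 - (cmod x3)\<^sup>2) + ((cmod x1)\<^sup>2 - (cmod x2)\<^sup>2)"
    using add_less_iff_of_sq_eq[OF norm_ge_zero norm_ge_zero w norm_diff_cnj_sq_via_swap] by blast
  then have "cmod (x1 - cnj x2 * x3) + cmod (x1 * x2 - x3) < 1 - (cmod x2)\<^sup>2"
    using add_less_iff_of_sq_eq[OF norm_ge_zero norm_ge_zero v norm_diff_cnj_sq_via_product]
      tetrablock_norm_diff_less[OF assms] by (simp add: algebra_simps)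
  then show ?thesis using v by (simp add: Psi_norm_def)
qed

lemma tetrablock_if_Psi_norm_less_1:
  assumes x1: "cmod x1 < 1" and x2: "cmod x2 < 1"
    and "Psi_norm x1 x2 x3 < 1" "Psi_norm x2 x1 x3 < 1"
  shows "tetrablock x1 x2 x3"
proof -
  have v: "0 < 1 - (cmod x2)\<^sup>2" using x2 by (simp add: abs_square_less_1)
  have u: "0 < 1 - (cmod x1)\<^sup>2" using x1 by (simp add: abs_square_less_1)
  have "cmod (x1 - cnj x2 * x3) + cmod (x1 * x2 - x3) < 1 - (cmod x2)\<^sup>2"
    using assms v by (simp add: Psi_norm_def)
  then have D1: "2 * cmod (x1 - cnj x2 * x3) < (1 - (cmod x2)\<^sup>2) + ((cmod x1)\<^sup>2 - (cmod x3)\<^sup>2)"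
    using add_less_iff_of_sq_eq[OF norm_ge_zero norm_ge_zero v norm_diff_cnj_sq_via_product] by blast
  have "cmod (x2 - cnj x1 * x3) + cmod (x2 * x1 - x3) < 1 - (cmod x1)\<^sup>2"
    using assms u by (simp add: Psi_norm_def)
  then have D2: "2 * cmod (x2 - cnj x1 * x3) < (1 - (cmod x1)\<^sup>2) + ((cmod x2)\<^sup>2 - (cmod x3)\<^sup>2)"
    using add_less_iff_of_sq_eq[OF norm_ge_zero norm_ge_zero u norm_diff_cnj_sq_via_product] by blast
  have "cmod x3 < 1" using norm_x3_le_Psi_norm[OF x2, of x3 x1] assms by linarith
  then show ?thesis unfolding tetrablock_def using D1 D2 by linarith
qed

lemma Psi_norm_swap_le_real:
  fixes g h d u v w :: real
  assumes "0 \<le> g" "0 \<le> h" "0 \<le> d" "0 < w"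
    and gh: "g + h < w" and hd: "h + d < u" and vu: "u \<le> v"
    and eq: "g\<^sup>2 = h\<^sup>2 + (v - u) * w"
  shows "(h + d) * v \<le> (g + d) * u"
proof (cases "g + h = 0")
  case True
  then have "g = 0" "h = 0" using assms by auto
  then show ?thesis using eq \<open>0 < w\<close> by simp
next
  case False
  have "(g + h) * ((g + d) * u - (h + d) * v) = u * (g\<^sup>2 - h\<^sup>2) - (v - u) * (h + d) * (g + h)"
    by (simp add: power2_eq_square algebra_simps)
  also have "\<dots> = (v - u) * (u * w - (h + d) * (g + h))"
    unfolding eq by (simp add: algebra_simps)
  finally have key: "(g + h) * ((g + d) * u - (h + d) * v) = (v - u) * (u * w - (h + d) * (g + h))" .
  have "(h + d) * (g + h) \<le> u * w"
    using hd gh assms by (intro mult_mono) auto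
  then have "0 \<le> (g + h) * ((g + d) * u - (h + d) * v)"
    unfolding key using vu by simp
  moreover have "g + h > 0" using False assms by simp
  ultimately show ?thesis by (simp add: zero_le_mult_iff)
qed

lemma Psi_norm_swap_le:
  assumes E: "tetrablock x1 x2 x3" and dom: "cmod x2 \<le> cmod x1"
  shows "Psi_norm x2 x1 x3 \<le> Psi_norm x1 x2 x3"
proof -
  define g h d where "g = cmod (x1 - cnj x2 * x3)" and "h = cmod (x2 - cnj x1 * x3)"
    and "d = cmod (x1 * x2 - x3)"
  define u v w where "u = 1 - (cmod x1)\<^sup>2" and "v = 1 - (cmod x2)\<^sup>2" and "w = 1 - (cmod x3)\<^sup>2"
  have u: "0 < u" using tetrablock_norm_x1[OF E] by (simp add: u_def abs_square_less_1)
  have v: "0 < v" using tetrablock_norm_x2[OF E] by (simp add: v_def abs_square_less_1)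
  have w: "0 < w" using tetrablock_norm_x3[OF E] by (simp add: w_def abs_square_less_1)
  have d': "cmod (x2 * x1 - x3) = d" by (simp add: d_def mult.commute)
  have gh: "g + h < w" using E by (simp add: tetrablock_def g_def h_def w_def)
  have hd: "h + d < u"
    using tetrablock_Psi_norm_less_1[of x2 x1 x3] E u
    by (simp add: tetrablock_commute Psi_norm_def d' h_def u_def)
  have vu: "u \<le> v" using dom by (simp add: u_def v_def power_mono)
  have eq: "g\<^sup>2 = h\<^sup>2 + (v - u) * w"
    using norm_diff_cnj_sq_via_swap[of x1 x2 x3] by (simp add: g_def h_def u_def v_def w_def)
  have "(h + d) * v \<le> (g + d) * u"
    by (rule Psi_norm_swap_le_real[OF _ _ _ w gh hd vu eq]) (simp_all add: g_def h_def d_def)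
  then show ?thesis using u v by (simp add: Psi_norm_def d' g_def h_def d_def u_def v_def field_simps)
qed

definition nonvanishing_closed_bidisc :: "complex \<Rightarrow> complex \<Rightarrow> complex \<Rightarrow> bool" where
  "nonvanishing_closed_bidisc x1 x2 x3 \<longleftrightarrow>
     (\<forall>z w. cmod z \<le> 1 \<longrightarrow> cmod w \<le> 1 \<longrightarrow> 1 - x1 * z - x2 * w + x3 * z * w \<noteq> 0)"

lemma nonvanishing_closed_bidisc_commute:
  "nonvanishing_closed_bidisc x1 x2 x3 \<longleftrightarrow> nonvanishing_closed_bidisc x2 x1 x3"
proof -
  have "1 - x1 * z - x2 * w + x3 * z * w = 1 - x2 * w - x1 * z + x3 * w * z" for z w by algebra
  then show ?thesis unfolding nonvanishing_closed_bidisc_def by metis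
qed

lemma nonvanishing_closed_bidisc_norm_x2:
  assumes "nonvanishing_closed_bidisc x1 x2 x3"
  shows "cmod x2 < 1"
proof (rule ccontr)
  assume "\<not> cmod x2 < 1"
  then have "x2 \<noteq> 0" and "cmod (1 / x2) \<le> 1" by (auto simp: norm_divide divide_le_eq_1)
  then have "1 - x1 * 0 - x2 * (1 / x2) + x3 * 0 * (1 / x2) \<noteq> 0"
    using assms norm_zero zero_le_one unfolding nonvanishing_closed_bidisc_def by metis
  then show False using \<open>x2 \<noteq> 0\<close> by simp
qed

lemma nonvanishing_closed_bidisc_Psi_norm_less_1:
  assumes nv: "nonvanishing_closed_bidisc x1 x2 x3"
  shows "Psi_norm x1 x2 x3 < 1"
proof (rule ccontr)
  assume "\<not> Psi_norm x1 x2 x3 < 1"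
  moreover have x2: "cmod x2 < 1" using nonvanishing_closed_bidisc_norm_x2[OF nv] .
  moreover obtain w where w: "cmod w \<le> 1" "cmod (Psi x1 x2 x3 w) = Psi_norm x1 x2 x3"
    using Psi_norm_attained[OF x2] by blast
  ultimately have P: "1 \<le> cmod (Psi x1 x2 x3 w)" by simp
  define z where "z = 1 / Psi x1 x2 x3 w"
  have "cmod z \<le> 1" using P by (simp add: z_def norm_divide divide_le_eq_1)
  moreover have "1 - x1 * z - x2 * w + x3 * z * w = (1 - x2 * w) * (1 - z * Psi x1 x2 x3 w)"
    using one_minus_mult_nonzero[OF x2 w(1)] by (simp add: Psi_def field_simps)
  moreover have "z * Psi x1 x2 x3 w = 1" using P by (auto simp: z_def)
  ultimately show False using nv w(1) unfolding nonvanishing_closed_bidisc_def by auto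
qed

lemma tetrablock_if_nonvanishing_closed_bidisc:
  assumes "nonvanishing_closed_bidisc x1 x2 x3"
  shows "tetrablock x1 x2 x3"
proof -
  have "nonvanishing_closed_bidisc x2 x1 x3"
    using assms nonvanishing_closed_bidisc_commute by blast
  then show ?thesis
    using assms by (intro tetrablock_if_Psi_norm_less_1 nonvanishing_closed_bidisc_norm_x2
      nonvanishing_closed_bidisc_Psi_norm_less_1)
qed

lemma nonvanishing_ball_iff_Psi_norm_le:
  assumes x2: "cmod x2 < 1" and l0: "l0 \<noteq> 0"
  shows "(\<forall>z\<in>ball 0 1. \<forall>w\<in>ball 0 1. l0 - x1 * z - x2 * l0 * w + x3 * z * w \<noteq> 0)
    \<longleftrightarrow> Psi_norm x1 x2 x3 \<le> cmod l0"
proof -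
  have factor: "l0 - x1 * z - x2 * l0 * w + x3 * z * w = (1 - x2 * w) * (l0 - z * Psi x1 x2 x3 w)"
    if "cmod w \<le> 1" for z w
    using one_minus_mult_nonzero[OF x2 that] by (simp add: Psi_def field_simps)
  show ?thesis
  proof
    assume nv: "\<forall>z\<in>ball 0 1. \<forall>w\<in>ball 0 1. l0 - x1 * z - x2 * l0 * w + x3 * z * w \<noteq> 0"
    show "Psi_norm x1 x2 x3 \<le> cmod l0"
    proof (rule ccontr)
      assume "\<not> Psi_norm x1 x2 x3 \<le> cmod l0"
      then obtain w where w: "w \<in> ball 0 1" "cmod l0 < cmod (Psi x1 x2 x3 w)"
        using less_Psi_norm_imp[OF x2] by (meson not_le)
      then have "Psi x1 x2 x3 w \<noteq> 0" by auto
      define z where "z = l0 / Psi x1 x2 x3 w"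
      have "z \<in> ball 0 1" using w(2) by (simp add: z_def norm_divide divide_less_eq_1)
      moreover have "l0 - z * Psi x1 x2 x3 w = 0" using \<open>Psi x1 x2 x3 w \<noteq> 0\<close> by (simp add: z_def)
      ultimately show False using nv w(1) factor[of w z] by auto
    qed
  next
    assume K: "Psi_norm x1 x2 x3 \<le> cmod l0"
    show "\<forall>z\<in>ball 0 1. \<forall>w\<in>ball 0 1. l0 - x1 * z - x2 * l0 * w + x3 * z * w \<noteq> 0"
    proof (intro ballI notI)
      fix z w :: complex assume z: "z \<in> ball 0 1" and w: "w \<in> ball 0 1"
        and "l0 - x1 * z - x2 * l0 * w + x3 * z * w = 0"
      then have "l0 = z * Psi x1 x2 x3 w"
        using factor[of w z] one_minus_mult_nonzero[OF x2, of w] by auto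
      then have "cmod l0 \<le> cmod z * cmod l0"
        using norm_Psi_le[OF x2, of w x1 x3] K w by (simp add: norm_mult mult_left_mono)
      then show False using z l0 by (simp add: mult_le_cancel_right1)
    qed
  qed
qed

section \<open>Reformulations of \<open>Psi_norm x1 x2 x3 \<le> r\<close>\<close>

lemma Psi_norm_split:
  fixes x1 x2 x3 :: complex
  assumes x2: "cmod x2 < 1"
  defines "v \<equiv> 1 - (cmod x2)\<^sup>2"
  defines "A \<equiv> cmod (x1 - cnj x2 * x3) / v" and "B \<equiv> cmod (x1 * x2 - x3) / v"
  shows "Psi_norm x1 x2 x3 = A + B"
    and "cmod x3 \<le> A * cmod x2 + B"
    and "\<bar>A * cmod x2 - B\<bar> \<le> cmod x3"
    and "(cmod x1)\<^sup>2 - (cmod x3)\<^sup>2 = v * (A\<^sup>2 - B\<^sup>2)"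
proof -
  have v: "0 < v" using x2 by (simp add: v_def abs_square_less_1)
  show "Psi_norm x1 x2 x3 = A + B"
    by (simp add: Psi_norm_def A_def B_def v_def add_divide_distrib)
  define a b where "a = (x1 - cnj x2 * x3) / of_real v" and "b = (x1 * x2 - x3) / of_real v"
  have ab: "cmod a = A" "cmod b = B"
    using v by (simp_all add: a_def b_def A_def B_def norm_divide)
  have "a * x2 - b = ((x1 - cnj x2 * x3) * x2 - (x1 * x2 - x3)) / of_real v"
    using v by (simp add: a_def b_def field_simps)
  also have "\<dots> = of_real v * x3 / of_real v"
    by (simp only: v_def x3_decomp[of x2 x3 x1, symmetric])
  finally have "x3 = a * x2 - b" using v by simp
  then have "cmod x3 = cmod (a * x2 - b)" by simp
  then show "cmod x3 \<le> A * cmod x2 + B" "\<bar>A * cmod x2 - B\<bar> \<le> cmod x3"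
    using norm_triangle_ineq4[of "a * x2" b] norm_triangle_ineq3[of "a * x2" b]
    by (simp_all add: ab norm_mult)
  have "(v * A)\<^sup>2 = (v * B)\<^sup>2 + v * ((cmod x1)\<^sup>2 - (cmod x3)\<^sup>2)"
    using norm_diff_cnj_sq_via_product[of x1 x2 x3] v by (simp add: A_def B_def v_def)
  then have "v * (v * A\<^sup>2) = v * (v * B\<^sup>2 + ((cmod x1)\<^sup>2 - (cmod x3)\<^sup>2))"
    by (simp add: power_mult_distrib power2_eq_square algebra_simps)
  then have "v * A\<^sup>2 = v * B\<^sup>2 + ((cmod x1)\<^sup>2 - (cmod x3)\<^sup>2)"
    using v by (simp only: mult_left_cancel less_irrefl)
  then show "(cmod x1)\<^sup>2 - (cmod x3)\<^sup>2 = v * (A\<^sup>2 - B\<^sup>2)"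
    by (simp add: algebra_simps)
qed

lemma Psi_norm_le_iff_quadratic:
  assumes x2: "cmod x2 < 1" and dom: "cmod x2 \<le> cmod x1" and r: "0 < r" "r < 1"
  shows "Psi_norm x1 x2 x3 \<le> r \<longleftrightarrow> cmod x3 \<le> r \<and>
     (cmod x1)\<^sup>2 + r\<^sup>2 * (cmod x2)\<^sup>2 - (cmod x3)\<^sup>2 + 2 * r * cmod (x1 * x2 - x3) \<le> r\<^sup>2"
proof -
  define g d v X where "g = cmod (x1 - cnj x2 * x3)" and "d = cmod (x1 * x2 - x3)"
    and "v = 1 - (cmod x2)\<^sup>2" and "X = (cmod x1)\<^sup>2 - (cmod x3)\<^sup>2"
  have v: "0 < v" using x2 by (simp add: v_def abs_square_less_1)
  have eq: "g\<^sup>2 = d\<^sup>2 + v * X"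
    using norm_diff_cnj_sq_via_product[of x1 x2 x3] by (simp add: g_def d_def v_def X_def)
  have K: "Psi_norm x1 x2 x3 \<le> r \<longleftrightarrow> g + d \<le> r * v"
    using v by (simp add: Psi_norm_def g_def d_def v_def[symmetric] divide_le_eq)
  have Q: "(cmod x1)\<^sup>2 + r\<^sup>2 * (cmod x2)\<^sup>2 - (cmod x3)\<^sup>2 + 2 * r * d \<le> r\<^sup>2 \<longleftrightarrow> X \<le> r\<^sup>2 * v - 2 * r * d"
    by (simp add: X_def v_def algebra_simps)
  have sq: "g\<^sup>2 \<le> (r * v - d)\<^sup>2 \<longleftrightarrow> X \<le> r\<^sup>2 * v - 2 * r * d"
  proof -
    have "(r * v - d)\<^sup>2 - g\<^sup>2 = v * (r\<^sup>2 * v - 2 * r * d - X)"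
      unfolding eq by (simp add: power2_eq_square algebra_simps)
    then have "g\<^sup>2 \<le> (r * v - d)\<^sup>2 \<longleftrightarrow> 0 \<le> v * (r\<^sup>2 * v - 2 * r * d - X)" by linarith
    then show ?thesis using v by (simp add: zero_le_mult_iff)
  qed
  show ?thesis
  proof
    assume "Psi_norm x1 x2 x3 \<le> r"
    then have "g \<le> r * v - d" "cmod x3 \<le> r"
      using K norm_x3_le_Psi_norm[OF x2, of x3 x1] by auto
    moreover from this have "g\<^sup>2 \<le> (r * v - d)\<^sup>2" by (intro power_mono) (simp_all add: g_def)
    ultimately show "cmod x3 \<le> r \<and> (cmod x1)\<^sup>2 + r\<^sup>2 * (cmod x2)\<^sup>2 - (cmod x3)\<^sup>2 + 2 * r * cmod (x1 * x2 - x3) \<le> r\<^sup>2"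
      using sq Q by (simp add: d_def)
  next
    assume H: "cmod x3 \<le> r \<and> (cmod x1)\<^sup>2 + r\<^sup>2 * (cmod x2)\<^sup>2 - (cmod x3)\<^sup>2 + 2 * r * cmod (x1 * x2 - x3) \<le> r\<^sup>2"
    then have X: "X \<le> r\<^sup>2 * v - 2 * r * d" using Q by (simp add: d_def)
    have "(cmod x2)\<^sup>2 \<le> (cmod x1)\<^sup>2" "(cmod x3)\<^sup>2 \<le> r\<^sup>2" using dom H by (auto intro: power_mono)
    moreover have "r\<^sup>2 * (cmod x2)\<^sup>2 \<le> (cmod x2)\<^sup>2" using r by (simp add: mult_left_le_one_le power_le_one)
    ultimately have "r * d \<le> r * (r * v)" using X by (simp add: X_def v_def power2_eq_square algebra_simps)
    then have "0 \<le> r * v - d" using r by simp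
    with sq X have "g \<le> r * v - d" by (metis power2_le_imp_le)
    then show "Psi_norm x1 x2 x3 \<le> r" using K by simp
  qed
qed

lemma affine_sq_le:
  fixes A B t r :: real
  assumes "0 \<le> A" "0 \<le> B" "0 \<le> t" "t \<le> 1" and s: "A + B \<le> r"
  shows "(A * t + B)\<^sup>2 \<le> r\<^sup>2 * t\<^sup>2 + r * (1 - t\<^sup>2) * B"
proof -
  have "A * t \<le> (r - B) * t" using s assms by (intro mult_right_mono) auto
  then have "A * t + B \<le> r * t + B * (1 - t)" by (simp add: algebra_simps)
  then have "(A * t + B)\<^sup>2 \<le> (r * t + B * (1 - t))\<^sup>2" using assms by (intro power_mono) auto
  moreover have "r\<^sup>2 * t\<^sup>2 + r * (1 - t\<^sup>2) * B - (r * t + B * (1 - t))\<^sup>2 = B * (1 - t)\<^sup>2 * (r - B)"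
    by (simp add: power2_eq_square algebra_simps)
  moreover have "B * (1 - t)\<^sup>2 * (r - B) \<ge> 0" using assms by (intro mult_nonneg_nonneg) auto
  ultimately show ?thesis by linarith
qed

lemma modulus_real_strict:
  fixes A B t r :: real
  assumes r: "0 < r" and Ar: "r < A" and "0 \<le> B" and BA: "B \<le> A - r" and t: "0 \<le> t" "t < 1"
  shows "r\<^sup>2 < r * A * (1 - t\<^sup>2) + (A * t - B)\<^sup>2"
proof (cases "A * t \<ge> A - r")
  case True
  then have "(A * t - (A - r))\<^sup>2 \<le> (A * t - B)\<^sup>2" using BA by (intro power_mono) auto
  moreover have "r * A * (1 - t\<^sup>2) + (A * t - (A - r))\<^sup>2 - r\<^sup>2 = (A - r) * A * (1 - t)\<^sup>2"
    by (simp add: power2_eq_square algebra_simps)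
  moreover have "(A - r) * A * (1 - t)\<^sup>2 > 0" using r Ar t by simp
  ultimately show ?thesis by linarith
next
  case False
  have "A * t * t \<le> A * t" using r Ar t by (simp add: mult_left_le)
  then have "r * (A * t\<^sup>2) < r * (A - r)" using False r by (simp add: power2_eq_square)
  moreover have "r * A * (1 - t\<^sup>2) - r\<^sup>2 = r * (A - r) - r * (A * t\<^sup>2)"
    by (simp add: power2_eq_square algebra_simps)
  ultimately show ?thesis using zero_le_power2[of "A * t - B"] by linarith
qed

lemma construction_real_nonneg:
  fixes A B t r :: real
  assumes "0 \<le> A" "0 \<le> B" and s: "A + B \<le> r" and "0 \<le> t" "t \<le> 1"
  shows "0 \<le> r * (1 - t\<^sup>2) * A - A\<^sup>2 + t\<^sup>2 * (r\<^sup>2 - B\<^sup>2) - 2 * A * B * t"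
proof -
  have "r * (1 - t\<^sup>2) * A - A\<^sup>2 + t\<^sup>2 * (r\<^sup>2 - B\<^sup>2) - 2 * A * B * t
      = A * (r - A) * (1 - t)\<^sup>2 + t\<^sup>2 * ((r - A)\<^sup>2 - B\<^sup>2) + 2 * A * t * (r - A - B)"
    by (simp add: power2_eq_square algebra_simps)
  moreover have "B\<^sup>2 \<le> (r - A)\<^sup>2" using assms by (intro power_mono) auto
  ultimately show ?thesis using assms by simp
qed

lemma modulus_identities:
  fixes x1 x2 x3 :: complex and r :: real
  assumes x2: "cmod x2 < 1"
  defines "v \<equiv> 1 - (cmod x2)\<^sup>2"
  defines "A \<equiv> cmod (x1 - cnj x2 * x3) / v" and "B \<equiv> cmod (x1 * x2 - x3) / v"
  defines "P \<equiv> r\<^sup>2 - (cmod x3)\<^sup>2" and "D \<equiv> (cmod x1)\<^sup>2 - r\<^sup>2 * (cmod x2)\<^sup>2"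
  shows "(cmod (of_real (r\<^sup>2) * x2 - cnj x1 * x3))\<^sup>2 = r\<^sup>2 * (cmod (x1 - cnj x2 * x3))\<^sup>2 - D * P"
    and "P + D - 2 * r * cmod (x1 - cnj x2 * x3) = v * ((r - A)\<^sup>2 - B\<^sup>2)"
proof -
  show "(cmod (of_real (r\<^sup>2) * x2 - cnj x1 * x3))\<^sup>2 = r\<^sup>2 * (cmod (x1 - cnj x2 * x3))\<^sup>2 - D * P"
    using norm_scaled_diff_cnj_sq[of r x2 x1 x3] by (simp add: D_def P_def algebra_simps)
  have v: "0 < v" using x2 by (simp add: v_def abs_square_less_1)
  have g: "cmod (x1 - cnj x2 * x3) = v * A" using v by (simp add: A_def)
  have "(cmod x1)\<^sup>2 - (cmod x3)\<^sup>2 = v * (A\<^sup>2 - B\<^sup>2)"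
    using Psi_norm_split(4)[OF x2, where ?x1.0 = x1 and ?x3.0 = x3] by (simp add: v_def A_def B_def)
  moreover have "P + D = r\<^sup>2 * v + ((cmod x1)\<^sup>2 - (cmod x3)\<^sup>2)"
    by (simp add: P_def D_def v_def algebra_simps)
  ultimately show "P + D - 2 * r * cmod (x1 - cnj x2 * x3) = v * ((r - A)\<^sup>2 - B\<^sup>2)"
    unfolding g by (simp add: power2_eq_square algebra_simps)
qed

lemma modulus_le_if_Psi_norm_le:
  assumes x2: "cmod x2 < 1" and r: "0 < r" and K: "Psi_norm x1 x2 x3 \<le> r"
  shows "cmod (of_real (r\<^sup>2) * x2 - cnj x1 * x3) + r * cmod (x1 - cnj x2 * x3) + (cmod x3)\<^sup>2 \<le> r\<^sup>2"
proof -
  define t v where "t = cmod x2" and "v = 1 - (cmod x2)\<^sup>2"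
  define A B where "A = cmod (x1 - cnj x2 * x3) / v" and "B = cmod (x1 * x2 - x3) / v"
  define P D where "P = r\<^sup>2 - (cmod x3)\<^sup>2" and "D = (cmod x1)\<^sup>2 - r\<^sup>2 * (cmod x2)\<^sup>2"
  define g \<mu> where "g = cmod (x1 - cnj x2 * x3)" and "\<mu> = cmod (of_real (r\<^sup>2) * x2 - cnj x1 * x3)"
  note split = Psi_norm_split[OF x2, where ?x1.0 = x1 and ?x3.0 = x3, folded v_def, folded A_def B_def t_def]
  note ids = modulus_identities[OF x2, where ?x1.0 = x1 and ?x3.0 = x3 and r = r,
      folded v_def, folded A_def B_def P_def D_def g_def \<mu>_def]
  have v: "0 < v" and t: "0 \<le> t" "t \<le> 1" using x2 by (simp_all add: v_def t_def abs_square_less_1)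
  have A: "0 \<le> A" and B: "0 \<le> B" using v by (simp_all add: A_def B_def)
  have s: "A + B \<le> r" using K split(1) by simp
  have g: "g = v * A" using v by (simp add: A_def g_def)
  have "(cmod x3)\<^sup>2 \<le> (A * t + B)\<^sup>2" using split(2) by (intro power_mono) auto
  also have "\<dots> \<le> r\<^sup>2 * t\<^sup>2 + r * v * B" using affine_sq_le[OF A B t s] by (simp add: v_def t_def)
  finally have "r * v * (r - A - B) \<le> P - r * g"
    by (simp add: P_def g v_def t_def power2_eq_square algebra_simps)
  moreover have "0 \<le> r * v * (r - A - B)" using r v s by simp
  ultimately have Pg: "0 \<le> P - r * g" by linarith
  have "B\<^sup>2 \<le> (r - A)\<^sup>2" using s B by (intro power_mono) auto
  moreover have "0 \<le> r * g" using r by (simp add: g_def)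
  then have "0 \<le> P" using Pg by linarith
  ultimately have "0 \<le> P * (v * ((r - A)\<^sup>2 - B\<^sup>2))" using v by simp
  also have "P * (v * ((r - A)\<^sup>2 - B\<^sup>2)) = (P - r * g)\<^sup>2 - \<mu>\<^sup>2"
    unfolding ids(2)[symmetric] ids(1) by (simp add: power2_eq_square algebra_simps)
  finally have "\<mu>\<^sup>2 \<le> (P - r * g)\<^sup>2" by simp
  then have "\<mu> \<le> P - r * g" using Pg by (rule power2_le_imp_le)
  then show ?thesis by (simp add: \<mu>_def g_def P_def)
qed

lemma Psi_norm_le_if_modulus_le:
  assumes x2: "cmod x2 < 1" and r: "0 < r"
    and H: "cmod (of_real (r\<^sup>2) * x2 - cnj x1 * x3) + r * cmod (x1 - cnj x2 * x3) + (cmod x3)\<^sup>2 \<le> r\<^sup>2"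
  shows "Psi_norm x1 x2 x3 \<le> r"
proof -
  define t v where "t = cmod x2" and "v = 1 - (cmod x2)\<^sup>2"
  define A B where "A = cmod (x1 - cnj x2 * x3) / v" and "B = cmod (x1 * x2 - x3) / v"
  define P D where "P = r\<^sup>2 - (cmod x3)\<^sup>2" and "D = (cmod x1)\<^sup>2 - r\<^sup>2 * (cmod x2)\<^sup>2"
  define g \<mu> where "g = cmod (x1 - cnj x2 * x3)" and "\<mu> = cmod (of_real (r\<^sup>2) * x2 - cnj x1 * x3)"
  note split = Psi_norm_split[OF x2, where ?x1.0 = x1 and ?x3.0 = x3, folded v_def, folded A_def B_def t_def]
  note ids = modulus_identities[OF x2, where ?x1.0 = x1 and ?x3.0 = x3 and r = r,
      folded v_def, folded A_def B_def P_def D_def g_def \<mu>_def]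
  have v: "0 < v" and t: "0 \<le> t" "t < 1" using x2 by (simp_all add: v_def t_def abs_square_less_1)
  have B: "0 \<le> B" using v by (simp add: B_def)
  have g: "g = v * A" using v by (simp add: A_def g_def)
  have \<mu>: "\<mu> \<le> P - r * g" using H by (simp add: \<mu>_def g_def P_def)
  have rg: "0 \<le> r * g" using r by (simp add: g_def)
  have "0 \<le> \<mu>" by (simp add: \<mu>_def)
  then have Pg: "r * g \<le> P" using \<mu> by linarith
  have "\<mu>\<^sup>2 \<le> (P - r * g)\<^sup>2" using \<mu> by (intro power_mono) (simp_all add: \<mu>_def)
  then have PAB: "0 \<le> P * (v * ((r - A)\<^sup>2 - B\<^sup>2))"
    unfolding ids(2)[symmetric] using ids(1) by (simp add: power2_eq_square algebra_simps)
  show ?thesis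
  proof (cases "P = 0")
    case True
    then have "r * g = 0" using Pg rg by simp
    then have "g = 0" using r by simp
    then have "A = 0" using v g by simp
    have "cmod x3 = r" using True r by (simp add: P_def power2_eq_iff_nonneg)
    then show ?thesis using split(1,3) \<open>A = 0\<close> B by simp
  next
    case False
    then have "0 < P" using Pg rg by simp
    then have "B\<^sup>2 \<le> (r - A)\<^sup>2" using PAB v by (simp add: zero_le_mult_iff)
    then have BA: "B \<le> \<bar>r - A\<bar>" using B by (metis abs_le_square_iff abs_of_nonneg)
    show ?thesis
    proof (rule ccontr)
      assume "\<not> Psi_norm x1 x2 x3 \<le> r"
      then have Ar: "r < A" using BA split(1) by (auto split: abs_split)
      have "(A * t - B)\<^sup>2 \<le> (cmod x3)\<^sup>2"
        using split(3) by (metis abs_le_square_iff abs_norm_cancel)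
      then have "r * A * (1 - t\<^sup>2) + (A * t - B)\<^sup>2 \<le> r\<^sup>2"
        using Pg by (simp add: g P_def v_def t_def algebra_simps)
      moreover have "r\<^sup>2 < r * A * (1 - t\<^sup>2) + (A * t - B)\<^sup>2"
        using modulus_real_strict[OF r Ar B _ t] BA Ar by simp
      ultimately show False by simp
    qed
  qed
qed

lemma Psi_norm_le_iff_modulus:
  assumes "cmod x2 < 1" "0 < r"
  shows "Psi_norm x1 x2 x3 \<le> r \<longleftrightarrow>
    cmod (of_real (r\<^sup>2) * x2 - cnj x1 * x3) + r * cmod (x1 - cnj x2 * x3) + (cmod x3)\<^sup>2 \<le> r\<^sup>2"
  using modulus_le_if_Psi_norm_le Psi_norm_le_if_modulus_le assms by blast

text \<open>This inequality is what makes the splitting of \<open>exists_construction_parameters\<close>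
  possible in the construction of extremal discs.\<close>

lemma construction_bound:
  assumes x2: "cmod x2 < 1" and dom: "cmod x2 \<le> cmod x1" and r: "0 < r" "r \<le> 1"
    and K: "Psi_norm x1 x2 x3 \<le> r"
  shows "(cmod x1)\<^sup>2 - r\<^sup>2 * (cmod x2)\<^sup>2 + cmod (cnj x1 * x3 - of_real (r\<^sup>2) * x2)
          \<le> r * cmod (x1 - cnj x2 * x3)"
proof -
  define t v where "t = cmod x2" and "v = 1 - (cmod x2)\<^sup>2"
  define A B where "A = cmod (x1 - cnj x2 * x3) / v" and "B = cmod (x1 * x2 - x3) / v"
  define P D where "P = r\<^sup>2 - (cmod x3)\<^sup>2" and "D = (cmod x1)\<^sup>2 - r\<^sup>2 * (cmod x2)\<^sup>2"
  define g \<mu> where "g = cmod (x1 - cnj x2 * x3)" and "\<mu> = cmod (of_real (r\<^sup>2) * x2 - cnj x1 * x3)"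
  note split = Psi_norm_split[OF x2, where ?x1.0 = x1 and ?x3.0 = x3, folded v_def, folded A_def B_def t_def]
  note ids = modulus_identities[OF x2, where ?x1.0 = x1 and ?x3.0 = x3 and r = r,
      folded v_def, folded A_def B_def P_def D_def g_def \<mu>_def]
  have v: "0 < v" and t: "0 \<le> t" "t \<le> 1" using x2 by (simp_all add: v_def t_def abs_square_less_1)
  have A: "0 \<le> A" and B: "0 \<le> B" using v by (simp_all add: A_def B_def)
  have s: "A + B \<le> r" using K split(1) by simp
  have g: "g = v * A" using v by (simp add: A_def g_def)
  have "(cmod x2)\<^sup>2 \<le> (cmod x1)\<^sup>2" using power_mono[OF dom norm_ge_zero] .
  moreover have "r\<^sup>2 * (cmod x2)\<^sup>2 \<le> (cmod x2)\<^sup>2" using r by (simp add: mult_left_le_one_le power_le_one)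
  ultimately have D: "0 \<le> D" unfolding D_def by linarith
  have "(cmod x3)\<^sup>2 \<le> (A * t + B)\<^sup>2" using split(2) by (intro power_mono) auto
  then have "r * (1 - t\<^sup>2) * A - A\<^sup>2 + t\<^sup>2 * (r\<^sup>2 - B\<^sup>2) - 2 * A * B * t \<le> r * g - D"
    using split(4) by (simp add: g D_def v_def t_def power2_eq_square algebra_simps)
  then have gD: "0 \<le> r * g - D" using construction_real_nonneg[OF A B s t] by linarith
  have "B\<^sup>2 \<le> (r - A)\<^sup>2" using s B by (intro power_mono) auto
  then have "0 \<le> D * (v * ((r - A)\<^sup>2 - B\<^sup>2))" using D v by simp
  also have "\<dots> = (r * g - D)\<^sup>2 - \<mu>\<^sup>2"
    unfolding ids(2)[symmetric] ids(1) by (simp add: power2_eq_square algebra_simps)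
  finally have "\<mu>\<^sup>2 \<le> (r * g - D)\<^sup>2" by simp
  then have "\<mu> \<le> r * g - D" using gD by (rule power2_le_imp_le)
  moreover have "cmod (cnj x1 * x3 - of_real (r\<^sup>2) * x2) = \<mu>" by (simp add: \<mu>_def norm_minus_commute)
  ultimately show ?thesis by (simp add: D_def g_def)
qed

section \<open>Analytic discs in the tetrablock through the origin\<close>

definition tetrablock_disc0 ::
    "(complex \<Rightarrow> complex) \<Rightarrow> (complex \<Rightarrow> complex) \<Rightarrow> (complex \<Rightarrow> complex) \<Rightarrow> bool" where
  "tetrablock_disc0 f1 f2 f3 \<longleftrightarrow>
     f1 holomorphic_on ball 0 1 \<and> f2 holomorphic_on ball 0 1 \<and> f3 holomorphic_on ball 0 1 \<and>
     f1 0 = 0 \<and> f2 0 = 0 \<and> f3 0 = 0 \<and> (\<forall>t\<in>ball 0 1. tetrablock (f1 t) (f2 t) (f3 t))"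

lemma tetrablock_disc0_commute:
  "tetrablock_disc0 f1 f2 f3 \<longleftrightarrow> tetrablock_disc0 f2 f1 f3"
  unfolding tetrablock_disc0_def using tetrablock_commute by blast

lemma exists_split_root:
  fixes D0 M R :: real
  assumes D0: "0 < D0" and M: "0 < M" and le: "D0 + M \<le> R"
  shows "\<exists>b. 0 < b \<and> b < 1 \<and> D0\<^sup>2 / (1 - b) + M\<^sup>2 / b = R\<^sup>2"
proof -
  define f where "f b = D0\<^sup>2 / (1 - b) + M\<^sup>2 / b" for b
  define b0 b1 where "b0 = M / (D0 + M)" and "b1 = 1 - D0\<^sup>2 / (4 * R\<^sup>2)"
  have R: "0 < R" using D0 M le by linarith
  have b0: "0 < b0" "1 - b0 = D0 / (D0 + M)" using D0 M by (simp_all add: b0_def field_simps)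
  have b1: "b1 < 1" using D0 R by (simp add: b1_def)
  have "f b0 = (D0 + M)\<^sup>2"
    using D0 M b0(2) by (simp add: f_def b0_def power2_eq_square field_simps)
  also have "\<dots> \<le> R\<^sup>2" using le D0 M by (intro power_mono) auto
  finally have fb0: "f b0 \<le> R\<^sup>2" .
  have "D0\<^sup>2 / (4 * R\<^sup>2) \<le> D0 / (4 * R)"
    using D0 R le M by (simp add: power2_eq_square field_simps mult_left_mono)
  also have "\<dots> \<le> D0 / (D0 + M)" using D0 M le by (intro divide_left_mono) auto
  finally have b01: "b0 \<le> b1" using b0(2) by (simp add: b1_def)
  have "D0\<^sup>2 / (1 - b1) = 4 * R\<^sup>2" using D0 R by (simp add: b1_def)
  moreover have "0 \<le> M\<^sup>2 / b1" using b0 b01 by simp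
  ultimately have "R\<^sup>2 \<le> f b1" using R by (simp add: f_def)
  moreover have "continuous_on {b0..b1} f"
    unfolding f_def using b0 b1 by (intro continuous_intros) auto
  ultimately obtain b where "b0 \<le> b" "b \<le> b1" "f b = R\<^sup>2"
    using IVT'[of f b0 "R\<^sup>2" b1] fb0 b01 by blast
  then show ?thesis using b0 b1 by (intro exI[of _ b]) (simp add: f_def)
qed

lemma exists_construction_parameters:
  fixes D0 R :: real and m :: complex
  assumes D0: "0 < D0" and R: "0 < R" and le: "D0 + cmod m \<le> R"
  obtains \<beta> s c where "0 < s" "\<beta>\<^sup>2 + s\<^sup>2 = 1" "of_real \<beta> * c = m" "(D0 / s)\<^sup>2 + (cmod c)\<^sup>2 = R\<^sup>2"
proof (cases "m = 0")
  case True
  define s where "s = D0 / R"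
  have "0 < s" "s \<le> 1" using D0 R le True by (simp_all add: s_def)
  moreover have "(D0 / s)\<^sup>2 = R\<^sup>2" using D0 R by (simp add: s_def)
  ultimately show thesis
    using True by (intro that[of s "sqrt (1 - s\<^sup>2)" 0]) (simp_all add: power_le_one)
next
  case False
  then obtain b where b: "0 < b" "b < 1" "D0\<^sup>2 / (1 - b) + (cmod m)\<^sup>2 / b = R\<^sup>2"
    using exists_split_root[OF D0 _ le] by auto
  show thesis
  proof (rule that)
    show "0 < sqrt (1 - b)" "(sqrt b)\<^sup>2 + (sqrt (1 - b))\<^sup>2 = 1" using b by simp_all
    show "of_real (sqrt b) * (m / of_real (sqrt b)) = m" using b by simp
    show "(D0 / sqrt (1 - b))\<^sup>2 + (cmod (m / of_real (sqrt b)))\<^sup>2 = R\<^sup>2"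
      using b by (simp add: norm_divide power_divide)
  qed
qed

lemma singular_2x2_kernel:
  fixes a b c d :: complex
  assumes "a * d - b * c = 0"
  shows "\<exists>y1 y2. (y1 \<noteq> 0 \<or> y2 \<noteq> 0) \<and> a * y1 + b * y2 = 0 \<and> c * y1 + d * y2 = 0"
proof (cases "a = 0 \<and> b = 0")
  case True
  show ?thesis
  proof (cases "c = 0 \<and> d = 0")
    case True
    then show ?thesis using \<open>a = 0 \<and> b = 0\<close> by (intro exI[of _ 1] exI[of _ 0]) simp
  next
    case False
    then show ?thesis using \<open>a = 0 \<and> b = 0\<close>
      by (intro exI[of _ d] exI[of _ "- c"]) (auto simp: mult.commute)
  qed
next
  case False
  have "c * b + d * (- a) = - (a * d - b * c)" by (simp add: algebra_simps)
  then show ?thesis using False assms by (intro exI[of _ b] exI[of _ "- a"]) (auto simp: mult.commute)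
qed

lemma norm_sq_unitary_2x2:
  fixes p :: real and a b c :: complex
  shows "(cmod (of_real p * a + cnj c * b))\<^sup>2 + (cmod (- (c * a) + of_real p * b))\<^sup>2
       = (p\<^sup>2 + (cmod c)\<^sup>2) * ((cmod a)\<^sup>2 + (cmod b)\<^sup>2)"
  by (rule of_real_eq_iff[where 'a = complex, THEN iffD1])
    (simp only: of_real_add of_real_mult complex_norm_square cnj_simps, simp only: of_real_power, algebra)

lemma norm_sq_rotation_diff:
  fixes \<beta> :: real and u g :: complex
  shows "(cmod (u + of_real \<beta> * g))\<^sup>2 - (cmod (g + of_real \<beta> * u))\<^sup>2
       = (1 - \<beta>\<^sup>2) * ((cmod u)\<^sup>2 - (cmod g)\<^sup>2)"
  by (rule of_real_eq_iff[where 'a = complex, THEN iffD1])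
    (simp only: of_real_add of_real_diff of_real_1 of_real_mult complex_norm_square cnj_simps,
     simp only: of_real_power, algebra)

lemma contractive_colligation:
  fixes u1 u2 G1 G2 z w :: complex and \<beta> s :: real
  assumes s: "0 < s" and \<beta>s: "\<beta>\<^sup>2 + s\<^sup>2 = 1" and z: "cmod z \<le> 1" and w: "cmod w \<le> 1"
    and e1: "of_real s * u1 = z * (G1 + of_real \<beta> * u2)"
    and e2: "u2 + of_real \<beta> * G1 = of_real s * w * G2"
  shows "(cmod u1)\<^sup>2 + (cmod u2)\<^sup>2 \<le> (cmod G1)\<^sup>2 + (cmod G2)\<^sup>2"
proof -
  have "s * cmod u1 = cmod z * cmod (G1 + of_real \<beta> * u2)"
    using arg_cong[OF e1, of cmod] s by (simp add: norm_mult)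
  also have "\<dots> \<le> cmod (G1 + of_real \<beta> * u2)" using z by (simp add: mult_left_le_one_le)
  finally have "(s * cmod u1)\<^sup>2 \<le> (cmod (G1 + of_real \<beta> * u2))\<^sup>2" using s by (intro power_mono) auto
  moreover have "cmod (u2 + of_real \<beta> * G1) = s * cmod w * cmod G2"
    using arg_cong[OF e2, of cmod] s by (simp add: norm_mult)
  then have "cmod (u2 + of_real \<beta> * G1) \<le> s * cmod G2"
    using w s by (simp add: mult_left_le_one_le mult.assoc mult_left_le)
  then have "(cmod (u2 + of_real \<beta> * G1))\<^sup>2 \<le> (s * cmod G2)\<^sup>2" by (intro power_mono) auto
  moreover have "1 - \<beta>\<^sup>2 = s\<^sup>2" using \<beta>s by simp
  then have "(cmod (u2 + of_real \<beta> * G1))\<^sup>2 - (cmod (G1 + of_real \<beta> * u2))\<^sup>2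
      = s\<^sup>2 * (cmod u2)\<^sup>2 - s\<^sup>2 * (cmod G1)\<^sup>2"
    using norm_sq_rotation_diff[of u2 \<beta> G1] by (simp add: right_diff_distrib)
  ultimately have "s\<^sup>2 * ((cmod u1)\<^sup>2 + (cmod u2)\<^sup>2) \<le> s\<^sup>2 * ((cmod G1)\<^sup>2 + (cmod G2)\<^sup>2)"
    unfolding power_mult_distrib distrib_left by linarith
  then show ?thesis using s by simp
qed

text \<open>The expression is, up to the factor \<open>s\<close>, the determinant of the matrix \<open>N\<close> below;
  a kernel vector of \<open>N\<close> satisfies the equations of a contractive colligation.\<close>

lemma realization_kernel:
  fixes x1 x2 L lam z w c :: complex and \<beta> s p R :: real
  assumes \<beta>s: "\<beta>\<^sup>2 + s\<^sup>2 = 1" and pc: "p\<^sup>2 + (cmod c)\<^sup>2 = R\<^sup>2"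
    and Q: "L\<^sup>2 + lam * of_real \<beta> * cnj c * x2 * L - lam * of_real (s * p) * L * (x1 * z + x2 * w)
          + lam * of_real \<beta> * c * x1 * L * z * w + lam\<^sup>2 * of_real (R\<^sup>2) * x1 * x2 * z * w = 0"
  obtains y1 y2 where "y1 \<noteq> 0 \<or> y2 \<noteq> 0"
    and "of_real s * (L * y1) = z * (lam * (of_real p * (x1 * y1) + cnj c * (x2 * y2)) + of_real \<beta> * (L * y2))"
    and "L * y2 + of_real \<beta> * (lam * (of_real p * (x1 * y1) + cnj c * (x2 * y2)))
           = of_real s * w * (lam * (- (c * (x1 * y1)) + of_real p * (x2 * y2)))"
proof -
  define S B P where "S = (of_real s :: complex)" and "B = (of_real \<beta> :: complex)"
    and "P = (of_real p :: complex)"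
  have hB: "B * B + S * S = 1"
    using arg_cong[OF \<beta>s, of "of_real :: real \<Rightarrow> complex"] by (simp add: B_def S_def power2_eq_square)
  have "(of_real (R\<^sup>2) :: complex) = of_real (p\<^sup>2) + of_real ((cmod c)\<^sup>2)"
    by (simp only: pc[symmetric] of_real_add)
  then have hP: "P\<^sup>2 + c * cnj c = of_real (R\<^sup>2)"
    unfolding complex_norm_square by (simp add: P_def)
  define N11 N12 N21 N22 where "N11 = z * lam * x1 * P - S * L"
    and "N12 = z * lam * x2 * cnj c + z * B * L"
    and "N21 = - (S * w * lam * x1 * c) - B * lam * x1 * P"
    and "N22 = S * w * lam * x2 * P - L - B * lam * x2 * cnj c"
  have "N11 * N22 - N12 * N21 = S * (L\<^sup>2 + lam * of_real \<beta> * cnj c * x2 * L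
      - lam * of_real (s * p) * L * (x1 * z + x2 * w)
      + lam * of_real \<beta> * c * x1 * L * z * w + lam\<^sup>2 * of_real (R\<^sup>2) * x1 * x2 * z * w)"
    unfolding N11_def N12_def N21_def N22_def using hB hP
    by (simp only: S_def B_def P_def of_real_mult) algebra
  then obtain y1 y2 where y: "y1 \<noteq> 0 \<or> y2 \<noteq> 0"
    and k1: "N11 * y1 + N12 * y2 = 0" and k2: "N21 * y1 + N22 * y2 = 0"
    using singular_2x2_kernel Q by (metis mult_zero_right)
  have "of_real s * (L * y1) = z * (lam * (of_real p * (x1 * y1) + cnj c * (x2 * y2)) + of_real \<beta> * (L * y2))"
    using k1 unfolding N11_def N12_def S_def B_def P_def by algebra
  moreover have "L * y2 + of_real \<beta> * (lam * (of_real p * (x1 * y1) + cnj c * (x2 * y2)))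
      = of_real s * w * (lam * (- (c * (x1 * y1)) + of_real p * (x2 * y2)))"
    using k2 unfolding N21_def N22_def S_def B_def P_def by algebra
  ultimately show thesis using y by (intro that)
qed

lemma realization_nonvanishing:
  fixes x1 x2 L lam z w c :: complex and \<beta> s p R :: real
  assumes x1: "x1 \<noteq> 0" and dom: "cmod x2 \<le> cmod x1"
    and lam: "cmod lam < 1" and z: "cmod z \<le> 1" and w: "cmod w \<le> 1"
    and s: "0 < s" and \<beta>s: "\<beta>\<^sup>2 + s\<^sup>2 = 1" and pc: "p\<^sup>2 + (cmod c)\<^sup>2 = R\<^sup>2"
    and L: "cmod L = R * cmod x1" and R: "0 < R"
  shows "L\<^sup>2 + lam * of_real \<beta> * cnj c * x2 * L - lam * of_real (s * p) * L * (x1 * z + x2 * w)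
          + lam * of_real \<beta> * c * x1 * L * z * w + lam\<^sup>2 * of_real (R\<^sup>2) * x1 * x2 * z * w \<noteq> 0"
proof
  assume "L\<^sup>2 + lam * of_real \<beta> * cnj c * x2 * L - lam * of_real (s * p) * L * (x1 * z + x2 * w)
          + lam * of_real \<beta> * c * x1 * L * z * w + lam\<^sup>2 * of_real (R\<^sup>2) * x1 * x2 * z * w = 0"
  then obtain y1 y2 where y: "y1 \<noteq> 0 \<or> y2 \<noteq> 0"
    and e: "of_real s * (L * y1) = z * (lam * (of_real p * (x1 * y1) + cnj c * (x2 * y2)) + of_real \<beta> * (L * y2))"
      "L * y2 + of_real \<beta> * (lam * (of_real p * (x1 * y1) + cnj c * (x2 * y2)))
         = of_real s * w * (lam * (- (c * (x1 * y1)) + of_real p * (x2 * y2)))"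
    using realization_kernel[OF \<beta>s pc] by blast
  have "(cmod (L * y1))\<^sup>2 + (cmod (L * y2))\<^sup>2
      \<le> (cmod (lam * (of_real p * (x1 * y1) + cnj c * (x2 * y2))))\<^sup>2
        + (cmod (lam * (- (c * (x1 * y1)) + of_real p * (x2 * y2))))\<^sup>2"
    using contractive_colligation[OF s \<beta>s z w e] .
  also have "\<dots> = (cmod lam)\<^sup>2 * ((cmod (of_real p * (x1 * y1) + cnj c * (x2 * y2)))\<^sup>2
      + (cmod (- (c * (x1 * y1)) + of_real p * (x2 * y2)))\<^sup>2)"
    unfolding norm_mult power_mult_distrib by (rule distrib_left[symmetric])
  also have "\<dots> = (cmod lam)\<^sup>2 * (R\<^sup>2 * ((cmod x1 * cmod y1)\<^sup>2 + (cmod x2 * cmod y2)\<^sup>2))"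
    by (simp only: norm_sq_unitary_2x2 pc norm_mult)
  also have "\<dots> \<le> (cmod lam)\<^sup>2 * ((cmod L)\<^sup>2 * ((cmod y1)\<^sup>2 + (cmod y2)\<^sup>2))"
  proof -
    have "(cmod x2 * cmod y2)\<^sup>2 \<le> (cmod x1 * cmod y2)\<^sup>2"
      using dom by (intro power_mono mult_right_mono) auto
    then have "R\<^sup>2 * ((cmod x1 * cmod y1)\<^sup>2 + (cmod x2 * cmod y2)\<^sup>2)
        \<le> R\<^sup>2 * ((cmod x1 * cmod y1)\<^sup>2 + (cmod x1 * cmod y2)\<^sup>2)"
      by (intro mult_left_mono add_left_mono) auto
    also have "\<dots> = (cmod L)\<^sup>2 * ((cmod y1)\<^sup>2 + (cmod y2)\<^sup>2)"
      using L by (simp add: power_mult_distrib algebra_simps)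
    finally show ?thesis by (intro mult_left_mono) auto
  qed
  finally have "(cmod L)\<^sup>2 * ((cmod y1)\<^sup>2 + (cmod y2)\<^sup>2) \<le> (cmod lam)\<^sup>2 * ((cmod L)\<^sup>2 * ((cmod y1)\<^sup>2 + (cmod y2)\<^sup>2))"
    by (simp add: norm_mult power_mult_distrib distrib_left)
  moreover have "0 < (cmod L)\<^sup>2 * ((cmod y1)\<^sup>2 + (cmod y2)\<^sup>2)"
    using y x1 R L by (auto simp: add_pos_nonneg add_nonneg_pos)
  moreover have "(cmod lam)\<^sup>2 < 1" using lam by (simp add: abs_square_less_1)
  ultimately show False by (simp add: mult_le_cancel_right1)
qed

lemma construction_membership:
  fixes x1 x2 L lam c m \<kappa> :: complex and D0 \<beta> s p R :: real
  assumes x1: "x1 \<noteq> 0" and dom: "cmod x2 \<le> cmod x1" and lam: "cmod lam < 1"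
    and s: "0 < s" and \<beta>s: "\<beta>\<^sup>2 + s\<^sup>2 = 1" and \<beta>c: "of_real \<beta> * c = m" and sp: "s * p = D0"
    and pc: "p\<^sup>2 + (cmod c)\<^sup>2 = R\<^sup>2" and L: "cmod L = R * cmod x1" and R: "0 < R"
    and \<kappa>: "\<kappa> * L = of_real (R\<^sup>2) * x1"
    and den: "L + lam * x2 * cnj m \<noteq> 0"
  defines "d \<equiv> L + lam * x2 * cnj m"
  shows "tetrablock (lam * of_real D0 * x1 / d) (lam * of_real D0 * x2 / d) (lam * (x1 * m + lam * \<kappa> * x2) / d)"
proof (rule tetrablock_if_nonvanishing_closed_bidisc, unfold nonvanishing_closed_bidisc_def, intro allI impI)
  fix z w :: complex assume z: "cmod z \<le> 1" and w: "cmod w \<le> 1"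
  have d: "d \<noteq> 0" using den by (simp add: d_def)
  have "(1 - lam * of_real D0 * x1 / d * z - lam * of_real D0 * x2 / d * w
        + lam * (x1 * m + lam * \<kappa> * x2) / d * z * w) * d
      = d - lam * of_real D0 * x1 * z - lam * of_real D0 * x2 * w + lam * (x1 * m + lam * \<kappa> * x2) * z * w"
    using d by (simp add: field_simps)
  also have "\<dots> * L = L\<^sup>2 + lam * of_real \<beta> * cnj c * x2 * L - lam * of_real (s * p) * L * (x1 * z + x2 * w)
          + lam * of_real \<beta> * c * x1 * L * z * w + lam\<^sup>2 * of_real (R\<^sup>2) * x1 * x2 * z * w"
    using \<kappa> unfolding d_def sp \<beta>c[symmetric] complex_cnj_mult complex_cnj_complex_of_real by algebra
  finally have "(1 - lam * of_real D0 * x1 / d * z - lam * of_real D0 * x2 / d * w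
        + lam * (x1 * m + lam * \<kappa> * x2) / d * z * w) * d * L
      = L\<^sup>2 + lam * of_real \<beta> * cnj c * x2 * L - lam * of_real (s * p) * L * (x1 * z + x2 * w)
          + lam * of_real \<beta> * c * x1 * L * z * w + lam\<^sup>2 * of_real (R\<^sup>2) * x1 * x2 * z * w" .
  moreover have "\<dots> \<noteq> 0" by (rule realization_nonvanishing[OF x1 dom lam z w s \<beta>s pc L R])
  ultimately show "1 - lam * of_real D0 * x1 / d * z - lam * of_real D0 * x2 / d * w
        + lam * (x1 * m + lam * \<kappa> * x2) / d * z * w \<noteq> 0" by auto
qed

lemma tetrablock_disc0_through_zero_pair:
  assumes l0: "l0 \<noteq> 0" "cmod l0 < 1" and x3: "cmod x3 \<le> cmod l0"
  shows "tetrablock_disc0 (\<lambda>_. 0) (\<lambda>_. 0) (\<lambda>t. t * x3 / l0)"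
  unfolding tetrablock_disc0_def
proof (intro conjI ballI)
  show "(\<lambda>t. t * x3 / l0) holomorphic_on ball 0 1" using l0 by (intro holomorphic_intros) auto
  fix t :: complex assume "t \<in> ball 0 1"
  then have "cmod t * cmod x3 \<le> cmod t * cmod l0" using x3 by (simp add: mult_left_mono)
  also have "\<dots> < cmod l0" using \<open>t \<in> ball 0 1\<close> l0 by simp
  finally have "cmod t * cmod x3 < cmod l0" .
  then have "cmod (t * x3 / l0) < 1" using l0 by (simp add: norm_mult norm_divide divide_less_eq)
  then show "tetrablock 0 0 (t * x3 / l0)" by (simp add: tetrablock_def abs_square_less_1)
qed simp_all

lemma construction_values:
  fixes x1 x2 x3 l0 :: complex
  defines "gc \<equiv> cnj x1 - x2 * cnj x3" and "m \<equiv> cnj x1 * x3 - of_real ((cmod l0)\<^sup>2) * x2"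
    and "D0 \<equiv> (cmod x1)\<^sup>2 - (cmod l0)\<^sup>2 * (cmod x2)\<^sup>2"
  shows "l0 * gc * x1 + l0 * x2 * cnj m = l0 * of_real D0"
    and "x1 * m + l0 * (cnj l0 * cnj gc) * x2 = of_real D0 * x3"
  unfolding gc_def m_def D0_def
  by (simp_all only: of_real_diff of_real_mult complex_norm_square cnj_simps) algebra+

lemma tetrablock_diff_cnj_nonzero:
  assumes E: "tetrablock x1 x2 x3" and x1: "x1 \<noteq> 0" and dom: "cmod x2 \<le> cmod x1"
  shows "x1 - cnj x2 * x3 \<noteq> 0"
proof
  assume "x1 - cnj x2 * x3 = 0"
  then have "cmod x1 = cmod x2 * cmod x3" by (simp add: norm_mult)
  also have "\<dots> \<le> cmod x1 * cmod x3" using dom by (simp add: mult_right_mono)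
  also have "\<dots> < cmod x1" using x1 tetrablock_norm_x3[OF E] by simp
  finally show False by simp
qed

lemma construction_disc0:
  fixes x1 x2 L c m \<kappa> :: complex and D0 \<beta> s p R :: real
  assumes x1: "x1 \<noteq> 0" and dom: "cmod x2 \<le> cmod x1"
    and s: "0 < s" and \<beta>s: "\<beta>\<^sup>2 + s\<^sup>2 = 1" and \<beta>c: "of_real \<beta> * c = m" and sp: "s * p = D0"
    and pc: "p\<^sup>2 + (cmod c)\<^sup>2 = R\<^sup>2" and L: "cmod L = R * cmod x1" and R: "0 < R"
    and \<kappa>: "\<kappa> * L = of_real (R\<^sup>2) * x1"
    and den: "\<And>t. cmod t \<le> 1 \<Longrightarrow> L + t * x2 * cnj m \<noteq> 0"
  shows "tetrablock_disc0 (\<lambda>t. t * of_real D0 * x1 / (L + t * x2 * cnj m))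
    (\<lambda>t. t * of_real D0 * x2 / (L + t * x2 * cnj m)) (\<lambda>t. t * (x1 * m + t * \<kappa> * x2) / (L + t * x2 * cnj m))"
  unfolding tetrablock_disc0_def
proof (intro conjI ballI)
  fix t :: complex assume "t \<in> ball 0 1"
  then have t: "cmod t < 1" by simp
  show "tetrablock (t * of_real D0 * x1 / (L + t * x2 * cnj m)) (t * of_real D0 * x2 / (L + t * x2 * cnj m))
      (t * (x1 * m + t * \<kappa> * x2) / (L + t * x2 * cnj m))"
    using construction_membership[OF x1 dom t s \<beta>s \<beta>c sp pc L R \<kappa> den] t by simp
qed (use den in \<open>auto intro!: holomorphic_intros\<close>)

lemma construction_denominator_nonzero:
  assumes dom: "cmod x2 \<le> cmod x1" and x1: "x1 \<noteq> 0" and L: "cmod L = R * cmod x1"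
    and m: "cmod m < R" and t: "cmod t \<le> 1"
  shows "L + t * x2 * cnj m \<noteq> 0"
proof
  assume "L + t * x2 * cnj m = 0"
  then have "L = - (t * x2 * cnj m)" by (simp add: eq_neg_iff_add_eq_0)
  then have "R * cmod x1 = cmod t * cmod x2 * cmod m" using L by (simp add: norm_mult)
  also have "\<dots> \<le> cmod x1 * cmod m"
  proof -
    have "cmod t * cmod x2 \<le> cmod x2" using t by (simp add: mult_left_le_one_le)
    then show ?thesis using dom by (intro mult_right_mono) auto
  qed
  also have "\<dots> < R * cmod x1" using m x1 by simp
  finally show False by simp
qed

lemma tetrablock_disc0_through_dominant_nonzero:
  assumes E: "tetrablock x1 x2 x3" and x1: "x1 \<noteq> 0" and dom: "cmod x2 \<le> cmod x1"
    and l0: "l0 \<noteq> 0" "cmod l0 < 1" and K: "Psi_norm x1 x2 x3 \<le> cmod l0"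
  shows "\<exists>f1 f2 f3. tetrablock_disc0 f1 f2 f3 \<and> f1 l0 = x1 \<and> f2 l0 = x2 \<and> f3 l0 = x3"
proof -
  define r gc where "r = cmod l0" and "gc = cnj x1 - x2 * cnj x3"
  define m D0 where "m = cnj x1 * x3 - of_real (r\<^sup>2) * x2" and "D0 = (cmod x1)\<^sup>2 - r\<^sup>2 * (cmod x2)\<^sup>2"
  define R L \<kappa> where "R = r * cmod gc" and "L = l0 * gc * x1" and "\<kappa> = cnj l0 * cnj gc"
  have r: "0 < r" "r < 1" using l0 by (simp_all add: r_def)
  have "cnj gc \<noteq> 0" using tetrablock_diff_cnj_nonzero[OF E x1 dom] by (simp add: gc_def)
  then have R: "0 < R" using r by (simp add: R_def)
  have "r\<^sup>2 * (cmod x2)\<^sup>2 \<le> r\<^sup>2 * (cmod x1)\<^sup>2" using dom by (intro mult_left_mono power_mono) auto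
  also have "\<dots> < (cmod x1)\<^sup>2" using r x1 by (simp add: power_less_one_iff)
  finally have D0: "0 < D0" by (simp add: D0_def)
  have "cmod gc = cmod (x1 - cnj x2 * x3)"
    by (metis complex_cnj_cnj complex_cnj_diff complex_cnj_mult complex_mod_cnj gc_def)
  then have Dm: "D0 + cmod m \<le> R"
    using construction_bound[OF tetrablock_norm_x2[OF E] dom r(1) less_imp_le[OF r(2)]] K
    by (simp add: D0_def m_def R_def r_def)
  then obtain \<beta> s c where \<beta>sc: "0 < s" "\<beta>\<^sup>2 + s\<^sup>2 = 1" "of_real \<beta> * c = m" "(D0 / s)\<^sup>2 + (cmod c)\<^sup>2 = R\<^sup>2"
    using exists_construction_parameters[OF D0 R] by blast
  have L: "cmod L = R * cmod x1" by (simp add: L_def R_def r_def norm_mult)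
  have "\<kappa> * L = (l0 * cnj l0) * (gc * cnj gc) * x1" by (simp add: \<kappa>_def L_def ac_simps)
  also have "\<dots> = of_real ((cmod l0)\<^sup>2) * of_real ((cmod gc)\<^sup>2) * x1" by (simp only: complex_norm_square)
  finally have \<kappa>: "\<kappa> * L = of_real (R\<^sup>2) * x1" by (simp add: R_def r_def power_mult_distrib)
  have "s * (D0 / s) = D0" using \<beta>sc(1) by simp
  moreover have "cmod m < R" using Dm D0 by simp
  ultimately have "tetrablock_disc0 (\<lambda>t. t * of_real D0 * x1 / (L + t * x2 * cnj m))
      (\<lambda>t. t * of_real D0 * x2 / (L + t * x2 * cnj m)) (\<lambda>t. t * (x1 * m + t * \<kappa> * x2) / (L + t * x2 * cnj m))"
    using construction_denominator_nonzero[OF dom x1 L]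
    by (intro construction_disc0[OF x1 dom \<beta>sc(1-3) _ \<beta>sc(4) L R \<kappa>]) auto
  moreover have "L + l0 * x2 * cnj m = l0 * of_real D0"
    by (simp only: L_def m_def D0_def r_def gc_def construction_values(1))
  moreover have "x1 * m + l0 * \<kappa> * x2 = of_real D0 * x3"
    by (simp only: \<kappa>_def m_def D0_def r_def gc_def construction_values(2))
  ultimately show ?thesis using D0 l0 by (intro exI[of _ "\<lambda>t. t * of_real D0 * x1 / (L + t * x2 * cnj m)"]
      exI[of _ "\<lambda>t. t * of_real D0 * x2 / (L + t * x2 * cnj m)"]
      exI[of _ "\<lambda>t. t * (x1 * m + t * \<kappa> * x2) / (L + t * x2 * cnj m)"]) simp
qed

lemma tetrablock_disc0_through_dominant:
  assumes E: "tetrablock x1 x2 x3" and dom: "cmod x2 \<le> cmod x1"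
    and l0: "l0 \<noteq> 0" "cmod l0 < 1" and K: "Psi_norm x1 x2 x3 \<le> cmod l0"
  shows "\<exists>f1 f2 f3. tetrablock_disc0 f1 f2 f3 \<and> f1 l0 = x1 \<and> f2 l0 = x2 \<and> f3 l0 = x3"
proof (cases "x1 = 0")
  case True
  then have "x2 = 0" using dom by simp
  moreover have "cmod x3 \<le> cmod l0"
    using norm_x3_le_Psi_norm[OF tetrablock_norm_x2[OF E], of x3 x1] K by linarith
  ultimately show ?thesis
    using True l0 tetrablock_disc0_through_zero_pair[OF l0] by fastforce
next
  case False
  then show ?thesis using tetrablock_disc0_through_dominant_nonzero[OF E _ dom l0 K] by blast
qed

lemma tetrablock_disc0_through:
  assumes E: "tetrablock x1 x2 x3" and l0: "l0 \<noteq> 0" "cmod l0 < 1"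
    and K: "Psi_norm x1 x2 x3 \<le> cmod l0" "Psi_norm x2 x1 x3 \<le> cmod l0"
  shows "\<exists>f1 f2 f3. tetrablock_disc0 f1 f2 f3 \<and> f1 l0 = x1 \<and> f2 l0 = x2 \<and> f3 l0 = x3"
proof (cases "cmod x2 \<le> cmod x1")
  case True
  then show ?thesis using tetrablock_disc0_through_dominant[OF E _ l0 K(1)] by blast
next
  case False
  then have "tetrablock x2 x1 x3" "cmod x1 \<le> cmod x2" using E tetrablock_commute by auto
  then obtain g1 g2 g3 where "tetrablock_disc0 g1 g2 g3" "g1 l0 = x2" "g2 l0 = x1" "g3 l0 = x3"
    using tetrablock_disc0_through_dominant[OF _ _ l0 K(2)] by blast
  then show ?thesis using tetrablock_disc0_commute by blast
qed

lemma tetrablock_disc0_Psi_norm_le: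
  assumes f: "tetrablock_disc0 f1 f2 f3" and l0: "cmod l0 < 1"
  shows "Psi_norm (f1 l0) (f2 l0) (f3 l0) \<le> cmod l0"
proof (rule ccontr)
  have E: "\<And>t. t \<in> ball 0 1 \<Longrightarrow> tetrablock (f1 t) (f2 t) (f3 t)"
    using f by (simp add: tetrablock_disc0_def)
  assume "\<not> ?thesis"
  then obtain w where w: "w \<in> ball 0 1" "cmod l0 < cmod (Psi (f1 l0) (f2 l0) (f3 l0) w)"
    using less_Psi_norm_imp[OF tetrablock_norm_x2[OF E]] l0 by (meson mem_ball_0 not_le)
  define g where "g t = Psi (f1 t) (f2 t) (f3 t) w" for t
  have "g holomorphic_on ball 0 1"
    unfolding g_def Psi_def using f w one_minus_mult_nonzero[OF tetrablock_norm_x2[OF E]]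
    by (intro holomorphic_intros) (auto simp: tetrablock_disc0_def)
  moreover have "g 0 = 0" using f by (simp add: g_def Psi_def tetrablock_disc0_def)
  moreover have "cmod (g t) < 1" if "cmod t < 1" for t
    using norm_Psi_le[OF tetrablock_norm_x2[OF E]] tetrablock_Psi_norm_less_1[OF E] w that
    unfolding g_def by (meson le_less_trans less_imp_le mem_ball_0)
  ultimately have "cmod (g l0) \<le> cmod l0" using Schwarz_Lemma(1) l0 by blast
  then show False using w(2) by (simp add: g_def)
qed

section \<open>The extended symmetrized polydisc\<close>

lemma tetrablock_divide_iff_beta:
  assumes N: "0 < N" and q: "cmod q < 1"
  shows "tetrablock (a / of_nat N) (b / of_nat N) q \<longleftrightarrow>
    cmod ((a - cnj b * q) / of_real (1 - (cmod q)\<^sup>2)) + cmod ((b - cnj a * q) / of_real (1 - (cmod q)\<^sup>2))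
      < real N"
proof -
  have w: "0 < 1 - (cmod q)\<^sup>2" using q by (simp add: abs_square_less_1)
  have "cmod ((a - cnj b * q) / of_real (1 - (cmod q)\<^sup>2)) + cmod ((b - cnj a * q) / of_real (1 - (cmod q)\<^sup>2))
      = (cmod (a - cnj b * q) + cmod (b - cnj a * q)) / (1 - (cmod q)\<^sup>2)"
    by (simp only: norm_divide norm_of_real abs_of_pos[OF w] add_divide_distrib)
  then show ?thesis using q w by (simp add: tetrablock_divide_iff[OF N] divide_less_eq)
qed

lemma tG_iff_tetrablock:
  assumes n: "2 \<le> n"
  shows "tG n p \<longleftrightarrow> (\<forall>j\<in>{1..n-1}. tetrablock (p j / bc n j) (p (n - j) / bc n j) (p n))"
proof
  assume "tG n p"
  then obtain \<beta> where q: "cmod (p n) < 1" and \<beta>: "\<And>j. j \<in> {1..n-1} \<Longrightarrow>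
      p j = \<beta> j + cnj (\<beta> (n - j)) * p n \<and> cmod (\<beta> j) + cmod (\<beta> (n - j)) < real (n choose j)"
    unfolding tG_def by blast
  have "0 < 1 - (cmod (p n))\<^sup>2" using q by (simp add: abs_square_less_1)
  then have w: "(of_real (1 - (cmod (p n))\<^sup>2) :: complex) \<noteq> 0" by (metis of_real_eq_0_iff order_less_irrefl)
  show "\<forall>j\<in>{1..n-1}. tetrablock (p j / bc n j) (p (n - j) / bc n j) (p n)"
  proof
    fix j assume j: "j \<in> {1..n-1}"
    then have j': "n - j \<in> {1..n-1}" "n - (n - j) = j" "0 < n choose j" by auto
    have pj: "p j = \<beta> j + cnj (\<beta> (n - j)) * p n" "p (n - j) = \<beta> (n - j) + cnj (\<beta> j) * p n"
      using \<beta>[OF j] \<beta>[OF j'(1)] j'(2) by auto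
    then show "tetrablock (p j / bc n j) (p (n - j) / bc n j) (p n)"
      using beta_coords_diff[OF pj] beta_coords_diff[OF pj(2,1)] \<beta>[OF j] w
      by (simp add: tetrablock_divide_iff_beta[OF j'(3) q])
  qed
next
  assume E: "\<forall>j\<in>{1..n-1}. tetrablock (p j / bc n j) (p (n - j) / bc n j) (p n)"
  then have q: "cmod (p n) < 1" using n tetrablock_norm_x3 by fastforce
  define \<beta> where "\<beta> j = (p j - cnj (p (n - j)) * p n) / of_real (1 - (cmod (p n))\<^sup>2)" for j
  have "p j = \<beta> j + cnj (\<beta> (n - j)) * p n \<and> cmod (\<beta> j) + cmod (\<beta> (n - j)) < real (n choose j)"
    if j: "j \<in> {1..n-1}" for j
  proof
    have nj: "n - (n - j) = j" and N: "0 < n choose j" using j by auto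
    show "p j = \<beta> j + cnj (\<beta> (n - j)) * p n"
      using beta_coords_exist[OF q, of "p j" "p (n - j)"] by (simp only: \<beta>_def nj)
    show "cmod (\<beta> j) + cmod (\<beta> (n - j)) < real (n choose j)"
      using E j tetrablock_divide_iff_beta[OF N q] by (simp only: \<beta>_def nj) blast
  qed
  then show "tG n p" unfolding tG_def using q by blast
qed

lemma Phi_eq_Psi:
  assumes j: "j \<le> n" and z: "cmod z \<le> 1" and b: "cmod (p (n - j)) < real (n choose j)"
  shows "Phi n j p z = Psi (p j / bc n j) (p (n - j) / bc n j) (p n) z"
proof -
  let ?C = "bc n j"
  have C: "?C \<noteq> 0" using j by simp
  have "cmod (p (n - j) * z) < real (n choose j)"
    using b z by (simp add: norm_mult) (meson le_less_trans mult_left_le norm_ge_zero)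
  then have "p (n - j) * z \<noteq> ?C" by (metis norm_of_nat order_less_irrefl)
  then have d: "?C - p (n - j) * z \<noteq> 0" by simp
  show ?thesis
  proof (cases "p j * p (n - j) = ?C\<^sup>2 * p n")
    case True
    then have "p n = p j * p (n - j) / ?C\<^sup>2" using C by (simp add: field_simps)
    then show ?thesis using True C d by (simp add: Phi_def Psi_def field_simps power2_eq_square)
  next
    case False
    then show ?thesis using C d by (simp add: Phi_def Psi_def field_simps)
  qed
qed

lemma Hinf_Phi_eq_Psi_norm:
  assumes n: "2 \<le> n" and p: "tG n p" and j: "j \<in> {1..n-1}"
  shows "Hinf_Phi n j p = Psi_norm (p j / bc n j) (p (n - j) / bc n j) (p n)"
proof -
  have jn: "j \<le> n" using j by auto
  have x2: "cmod (p (n - j) / bc n j) < 1"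
    using p j tG_iff_tetrablock[OF n] tetrablock_norm_x2 by blast
  then have "cmod (p (n - j)) < real (n choose j)" using jn by (simp add: norm_divide divide_less_eq)
  then have "Hinf_Phi n j p = (SUP z\<in>ball 0 1. cmod (Psi (p j / bc n j) (p (n - j) / bc n j) (p n) z))"
    unfolding Hinf_Phi_def using Phi_eq_Psi[OF jn] by (intro SUP_cong) auto
  also have "\<dots> = Psi_norm (p j / bc n j) (p (n - j) / bc n j) (p n)" by (rule SUP_norm_Psi[OF x2])
  finally show ?thesis .
qed

lemma Hinf_Phi_cong:
  assumes "p j = p' j" "p (n - j) = p' (n - j)" "p n = p' n"
  shows "Hinf_Phi n j p = Hinf_Phi n j p'"
  unfolding Hinf_Phi_def Phi_def assms ..

lemma Hinf_Phi_le_if_G_disc: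
  assumes n: "2 \<le> n" and l0: "cmod l0 < 1"
    and hol: "\<forall>k\<in>{1..n}. (\<lambda>z. \<psi> z k) holomorphic_on ball 0 1"
    and G: "\<forall>z\<in>ball 0 1. tG n (\<psi> z)" and zero: "\<forall>k\<in>{1..n}. \<psi> 0 k = 0"
    and j: "j \<in> {1..n-1}"
  shows "Hinf_Phi n j (\<psi> l0) \<le> cmod l0"
proof -
  have k: "j \<in> {1..n}" "n - j \<in> {1..n}" "n \<in> {1..n}" using j by auto
  have "tetrablock_disc0 (\<lambda>z. \<psi> z j / bc n j) (\<lambda>z. \<psi> z (n - j) / bc n j) (\<lambda>z. \<psi> z n)"
    unfolding tetrablock_disc0_def using hol zero G k j tG_iff_tetrablock[OF n]
    by (auto intro!: holomorphic_intros)
  then have "Psi_norm (\<psi> l0 j / bc n j) (\<psi> l0 (n - j) / bc n j) (\<psi> l0 n) \<le> cmod l0"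
    using tetrablock_disc0_Psi_norm_le l0 by blast
  then show ?thesis using Hinf_Phi_eq_Psi_norm[OF n _ j] G l0 by simp
qed

lemma tetrablock_midpoint:
  assumes "tetrablock x1 x2 x3"
  shows "tetrablock ((x1 + x2) / 2) ((x1 + x2) / 2) x3"
proof -
  have "(x1 + x2) / 2 - cnj ((x1 + x2) / 2) * x3 = ((x1 - cnj x2 * x3) + (x2 - cnj x1 * x3)) / 2"
    by (simp add: field_simps)
  then have "cmod ((x1 + x2) / 2 - cnj ((x1 + x2) / 2) * x3)
      = cmod ((x1 - cnj x2 * x3) + (x2 - cnj x1 * x3)) / 2"
    by (simp only: norm_divide) simp
  also have "\<dots> \<le> (cmod (x1 - cnj x2 * x3) + cmod (x2 - cnj x1 * x3)) / 2"
    by (simp add: norm_triangle_ineq divide_right_mono)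
  finally show ?thesis using assms by (simp add: tetrablock_def)
qed

text \<open>\<open>J_n\<close> is the image of the tetrablock under this map.\<close>

definition Jn_embed :: "nat \<Rightarrow> complex \<Rightarrow> complex \<Rightarrow> complex \<Rightarrow> nat \<Rightarrow> complex" where
  "Jn_embed n a b q k =
     (if k = n then q else bc n k * (if 2 * k < n then a else if n < 2 * k then b else (a + b) / 2))"

lemma tG_Jn_embed:
  assumes n: "2 \<le> n" and E: "tetrablock a b q"
  shows "tG n (Jn_embed n a b q)"
  unfolding tG_iff_tetrablock[OF n]
proof
  fix k assume k: "k \<in> {1..n-1}"
  then have C: "bc n (n - k) = bc n k" "bc n k \<noteq> 0" "n - (n - k) = k" "k \<noteq> n" "n - k \<noteq> n"
    by (auto simp: binomial_symmetric[symmetric])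
  consider "2 * k < n" | "n < 2 * k" | "2 * k = n" by linarith
  then show "tetrablock (Jn_embed n a b q k / bc n k) (Jn_embed n a b q (n - k) / bc n k) (Jn_embed n a b q n)"
  proof cases
    case 1
    then have "n < 2 * (n - k)" by arith
    then show ?thesis using 1 E C by (simp add: Jn_embed_def)
  next
    case 2
    then have "2 * (n - k) < n" "\<not> 2 * k < n" using k by auto
    then show ?thesis using 2 E C tetrablock_commute by (simp add: Jn_embed_def)
  next
    case 3
    then have "n - k = k" by arith
    then show ?thesis using 3 tetrablock_midpoint[OF E] C by (simp add: Jn_embed_def)
  qed
qed

lemma choose_diff_one: "0 < n \<Longrightarrow> n choose (n - Suc 0) = n"
  by (subst binomial_symmetric) auto

lemma Jn_eq_Jn_embed:
  assumes n: "2 \<le> n" and J: "Jn n y" and k: "k \<in> {1..n}"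
  shows "y k = Jn_embed n (y 1 / of_nat n) (y (n - 1) / of_nat n) (y n) k"
proof -
  have nz: "(of_nat n :: complex) \<noteq> 0" and n1: "bc n (n - 1) = of_nat n"
    using n by (simp_all add: choose_diff_one)
  have inner: "y j = bc n j / of_nat n * y 1 \<and> y (n - j) = bc n j / of_nat n * y (n - 1)"
    if "2 \<le> j" "2 * j < n" for j
    using J that unfolding Jn_def by (cases "odd n") auto
  consider "k = n" | "2 * k < n" "k \<noteq> n" | "n < 2 * k" "k \<noteq> n" | "2 * k = n" by linarith
  then show ?thesis
  proof cases
    case 2
    then show ?thesis using inner[of k] nz k by (cases "k = 1") (auto simp: Jn_embed_def)
  next
    case 3
    then obtain j where j: "k = n - j" "1 \<le> j" "2 * j < n" using k by (intro that[of "n - k"]) auto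
    then have "bc n k = bc n j" by (simp add: binomial_symmetric[symmetric])
    then show ?thesis using 3 inner[of j] nz n1 j by (cases "j = 1") (auto simp: Jn_embed_def)
  next
    case 4
    then have "even n" "k = n div 2" by auto
    then show ?thesis using J 4 nz unfolding Jn_def by (simp add: Jn_embed_def field_simps)
  qed (simp add: Jn_embed_def)
qed

lemma Jn_if_le_3:
  assumes "2 \<le> n" "n \<le> 3" and "tG n y"
  shows "Jn n y"
proof -
  have "n = 2 \<or> n = 3" using assms by auto
  then show ?thesis using assms(3) unfolding Jn_def by (auto simp: field_simps)
qed

lemma G_disc_through_if_Hinf_Phi_le:
  assumes n: "2 \<le> n" and J: "Jn n y" and l0: "l0 \<noteq> 0" "cmod l0 < 1"
    and H: "\<forall>k\<in>{1..n-1}. Hinf_Phi n k y \<le> cmod l0"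
  shows "\<exists>\<psi> :: complex \<Rightarrow> nat \<Rightarrow> complex.
        (\<forall>k\<in>{1..n}. (\<lambda>z. \<psi> z k) holomorphic_on ball 0 1) \<and>
        (\<forall>z\<in>ball 0 1. tG n (\<psi> z)) \<and> (\<forall>k\<in>{1..n}. \<psi> 0 k = 0) \<and> (\<forall>k\<in>{1..n}. \<psi> l0 k = y k)"
proof -
  define x1 x2 where "x1 = y 1 / of_nat n" and "x2 = y (n - 1) / of_nat n"
  have y: "tG n y" using J by (simp add: Jn_def)
  have j: "1 \<in> {1..n-1}" "n - 1 \<in> {1..n-1}" "n - (n - 1) = 1" and bc: "bc n (n - 1) = of_nat n"
    using n by (auto simp: choose_diff_one)
  have "tetrablock (y 1 / bc n 1) (y (n - 1) / bc n 1) (y n)" using y j(1) tG_iff_tetrablock[OF n] by blast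
  then have E: "tetrablock x1 x2 (y n)" by (simp add: x1_def x2_def)
  have "Hinf_Phi n 1 y = Psi_norm x1 x2 (y n)"
    using Hinf_Phi_eq_Psi_norm[OF n y j(1)] by (simp add: x1_def x2_def)
  moreover have "Hinf_Phi n (n - 1) y = Psi_norm x2 x1 (y n)"
    using Hinf_Phi_eq_Psi_norm[OF n y j(2)] j(3) bc by (simp add: x1_def x2_def)
  ultimately have K: "Psi_norm x1 x2 (y n) \<le> cmod l0" "Psi_norm x2 x1 (y n) \<le> cmod l0"
    using H[rule_format, OF j(1)] H[rule_format, OF j(2)] by simp_all
  obtain f1 f2 f3 where f: "tetrablock_disc0 f1 f2 f3" "f1 l0 = x1" "f2 l0 = x2" "f3 l0 = y n"
    using tetrablock_disc0_through[OF E l0 K] by blast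
  define \<psi> where "\<psi> z = Jn_embed n (f1 z) (f2 z) (f3 z)" for z
  have "(\<lambda>z. \<psi> z k) holomorphic_on ball 0 1" for k
    using f(1) unfolding \<psi>_def Jn_embed_def tetrablock_disc0_def
    by (cases "k = n"; cases "2 * k < n"; cases "n < 2 * k") (simp_all add: holomorphic_intros)
  moreover have "tG n (\<psi> z)" if "z \<in> ball 0 1" for z
    using f(1) that tG_Jn_embed[OF n] by (simp add: \<psi>_def tetrablock_disc0_def)
  moreover have "\<psi> 0 k = 0" for k using f(1) by (simp add: \<psi>_def Jn_embed_def tetrablock_disc0_def)
  moreover have "\<psi> l0 k = y k" if "k \<in> {1..n}" for k
    using Jn_eq_Jn_embed[OF n J that] f(2-4) by (simp add: \<psi>_def x1_def x2_def)
  ultimately show ?thesis by blast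
qed

lemma norm_diff_cnj_divide:
  assumes "0 < N"
  shows "cmod (a / of_nat N - cnj (b / of_nat N) * q) = cmod (a - cnj b * q) / real N"
proof -
  have "a / of_nat N - cnj (b / of_nat N) * q = (a - cnj b * q) / of_nat N"
    by (simp add: diff_divide_distrib)
  then show ?thesis by (simp add: norm_divide)
qed

lemma norm_mult_divide_diff:
  assumes "0 < N"
  shows "cmod (a / of_nat N * (b / of_nat N) - q) = cmod (a * b - (of_nat N)\<^sup>2 * q) / (real N)\<^sup>2"
proof -
  have "a / of_nat N * (b / of_nat N) - q = (a * b - (of_nat N)\<^sup>2 * q) / (of_nat N)\<^sup>2"
    using assms by (simp add: field_simps power2_eq_square)
  then show ?thesis by (simp add: norm_divide norm_power)
qed

lemma ratio_eq_Psi_norm_divide: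
  assumes N: "0 < N" and b: "cmod b < real N"
  shows "(real N * cmod (a - cnj b * q) + cmod (a * b - (of_nat N)\<^sup>2 * q)) / ((real N)\<^sup>2 - (cmod b)\<^sup>2)
       = Psi_norm (a / of_nat N) (b / of_nat N) q"
proof -
  have "1 - (cmod (b / of_nat N))\<^sup>2 = ((real N)\<^sup>2 - (cmod b)\<^sup>2) / (real N)\<^sup>2"
    using N by (simp add: norm_divide power_divide field_simps)
  moreover have "cmod (a - cnj b * q) / real N + cmod (a * b - (of_nat N)\<^sup>2 * q) / (real N)\<^sup>2
      = (real N * cmod (a - cnj b * q) + cmod (a * b - (of_nat N)\<^sup>2 * q)) / (real N)\<^sup>2"
    using N by (simp add: field_simps power2_eq_square)
  ultimately show ?thesis
    using N unfolding Psi_norm_def norm_diff_cnj_divide[OF N] norm_mult_divide_diff[OF N] by simp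
qed

lemma bidisc_cond_divide:
  fixes a b q l0 :: complex
  assumes "0 < N"
  shows "(\<forall>z\<in>ball 0 1. \<forall>w\<in>ball 0 1. of_nat N * l0 - a * z - b * l0 * w + of_nat N * q * z * w \<noteq> 0)
     \<longleftrightarrow> (\<forall>z\<in>ball 0 1. \<forall>w\<in>ball 0 1. l0 - a / of_nat N * z - b / of_nat N * l0 * w + q * z * w \<noteq> 0)"
proof -
  have nz: "(of_nat N :: complex) \<noteq> 0" using assms by simp
  have "of_nat N * l0 - a * z - b * l0 * w + of_nat N * q * z * w
     = of_nat N * (l0 - a / of_nat N * z - b / of_nat N * l0 * w + q * z * w)" for z w
    using nz by (simp add: field_simps)
  then show ?thesis using nz by simp
qed

lemma quadratic_cond_divide:
  assumes N: "0 < N"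
  shows "(cmod a)\<^sup>2 + r\<^sup>2 * (cmod b)\<^sup>2 - (real N)\<^sup>2 * (cmod q)\<^sup>2 + 2 * r * cmod (a * b - (of_nat N)\<^sup>2 * q)
        \<le> (real N)\<^sup>2 * r\<^sup>2
    \<longleftrightarrow> (cmod (a / of_nat N))\<^sup>2 + r\<^sup>2 * (cmod (b / of_nat N))\<^sup>2 - (cmod q)\<^sup>2
        + 2 * r * cmod (a / of_nat N * (b / of_nat N) - q) \<le> r\<^sup>2"
proof -
  have "(cmod (a / of_nat N))\<^sup>2 + r\<^sup>2 * (cmod (b / of_nat N))\<^sup>2 - (cmod q)\<^sup>2
        + 2 * r * cmod (a / of_nat N * (b / of_nat N) - q)
      = ((cmod a)\<^sup>2 + r\<^sup>2 * (cmod b)\<^sup>2 - (real N)\<^sup>2 * (cmod q)\<^sup>2 + 2 * r * cmod (a * b - (of_nat N)\<^sup>2 * q))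
        / (real N)\<^sup>2"
    using N unfolding norm_mult_divide_diff[OF N] by (simp add: norm_divide power_divide field_simps)
  then show ?thesis using N by (simp add: divide_le_eq mult.commute)
qed

lemma modulus_cond_divide:
  assumes N: "0 < N"
  shows "cmod (of_real (r\<^sup>2) * b - cnj a * q) + r * cmod (a - cnj b * q) + real N * (cmod q)\<^sup>2
        \<le> real N * r\<^sup>2
    \<longleftrightarrow> cmod (of_real (r\<^sup>2) * (b / of_nat N) - cnj (a / of_nat N) * q)
        + r * cmod (a / of_nat N - cnj (b / of_nat N) * q) + (cmod q)\<^sup>2 \<le> r\<^sup>2"
proof -
  have "of_real (r\<^sup>2) * (b / of_nat N) - cnj (a / of_nat N) * q = (of_real (r\<^sup>2) * b - cnj a * q) / of_nat N"
    by (simp add: diff_divide_distrib)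
  then have "cmod (of_real (r\<^sup>2) * (b / of_nat N) - cnj (a / of_nat N) * q)
        + r * cmod (a / of_nat N - cnj (b / of_nat N) * q) + (cmod q)\<^sup>2
      = (cmod (of_real (r\<^sup>2) * b - cnj a * q) + r * cmod (a - cnj b * q) + real N * (cmod q)\<^sup>2) / real N"
    using N unfolding norm_diff_cnj_divide[OF N] by (simp add: norm_divide field_simps)
  then show ?thesis using N by (simp add: divide_le_eq mult.commute)
qed

text \<open>Conditions (4) to (7) for the pair \<open>(a, b) = (y_j, y_(n-j))\<close> with \<open>q = y_n\<close>
  and \<open>N = n choose j\<close>.\<close>

definition ratio_cond :: "nat \<Rightarrow> complex \<Rightarrow> complex \<Rightarrow> complex \<Rightarrow> complex \<Rightarrow> bool" where
  "ratio_cond N a b q l \<longleftrightarrow>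
     (cmod b \<le> cmod a \<longrightarrow>
        (real N * cmod (a - cnj b * q) + cmod (a * b - (of_nat N)\<^sup>2 * q))
          / ((real N)\<^sup>2 - (cmod b)\<^sup>2) \<le> cmod l) \<and>
     (cmod a \<le> cmod b \<longrightarrow>
        (real N * cmod (b - cnj a * q) + cmod (a * b - (of_nat N)\<^sup>2 * q))
          / ((real N)\<^sup>2 - (cmod a)\<^sup>2) \<le> cmod l)"

definition bidisc_cond :: "nat \<Rightarrow> complex \<Rightarrow> complex \<Rightarrow> complex \<Rightarrow> complex \<Rightarrow> bool" where
  "bidisc_cond N a b q l \<longleftrightarrow>
     (cmod b \<le> cmod a \<longrightarrow> (\<forall>z\<in>ball 0 1. \<forall>w\<in>ball 0 1.
        of_nat N * l - a * z - b * l * w + of_nat N * q * z * w \<noteq> 0)) \<and>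
     (cmod a \<le> cmod b \<longrightarrow> (\<forall>z\<in>ball 0 1. \<forall>w\<in>ball 0 1.
        of_nat N * l - b * z - a * l * w + of_nat N * q * z * w \<noteq> 0))"

definition quadratic_cond :: "nat \<Rightarrow> complex \<Rightarrow> complex \<Rightarrow> complex \<Rightarrow> complex \<Rightarrow> bool" where
  "quadratic_cond N a b q l \<longleftrightarrow>
     (cmod b \<le> cmod a \<longrightarrow>
        (cmod a)\<^sup>2 + (cmod l)\<^sup>2 * (cmod b)\<^sup>2 - (real N)\<^sup>2 * (cmod q)\<^sup>2
          + 2 * cmod l * cmod (a * b - (of_nat N)\<^sup>2 * q) \<le> (real N)\<^sup>2 * (cmod l)\<^sup>2) \<and>
     (cmod a \<le> cmod b \<longrightarrow>
        (cmod b)\<^sup>2 + (cmod l)\<^sup>2 * (cmod a)\<^sup>2 - (real N)\<^sup>2 * (cmod q)\<^sup>2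
          + 2 * cmod l * cmod (a * b - (of_nat N)\<^sup>2 * q) \<le> (real N)\<^sup>2 * (cmod l)\<^sup>2)"

definition modulus_cond :: "nat \<Rightarrow> complex \<Rightarrow> complex \<Rightarrow> complex \<Rightarrow> complex \<Rightarrow> bool" where
  "modulus_cond N a b q l \<longleftrightarrow>
     (cmod b \<le> cmod a \<longrightarrow>
        cmod (of_real ((cmod l)\<^sup>2) * b - cnj a * q) + cmod l * cmod (a - cnj b * q)
          + real N * (cmod q)\<^sup>2 \<le> real N * (cmod l)\<^sup>2) \<and>
     (cmod a \<le> cmod b \<longrightarrow>
        cmod (of_real ((cmod l)\<^sup>2) * a - cnj b * q) + cmod l * cmod (b - cnj a * q)
          + real N * (cmod q)\<^sup>2 \<le> real N * (cmod l)\<^sup>2)"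

lemma dominant_cond_iff:
  fixes u v H1 H2 r :: real
  assumes "v \<le> u \<Longrightarrow> P \<longleftrightarrow> H1 \<le> r" "u \<le> v \<Longrightarrow> Q \<longleftrightarrow> H2 \<le> r"
    and "v \<le> u \<Longrightarrow> H2 \<le> H1" "u \<le> v \<Longrightarrow> H1 \<le> H2"
  shows "(v \<le> u \<longrightarrow> P) \<and> (u \<le> v \<longrightarrow> Q) \<longleftrightarrow> H1 \<le> r \<and> H2 \<le> r"
  using assms by (cases "v \<le> u"; cases "u \<le> v") auto

lemma tetrablock_divide_norms:
  assumes "0 < N" "tetrablock (a / of_nat N) (b / of_nat N) q"
  shows "cmod a < real N" "cmod b < real N"
  using tetrablock_norm_x1[OF assms(2)] tetrablock_norm_x2[OF assms(2)] assms(1)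
  by (simp_all add: norm_divide divide_less_eq)

lemma Psi_norm_divide_swap_le:
  assumes "0 < N" "tetrablock (a / of_nat N) (b / of_nat N) q" "cmod b \<le> cmod a"
  shows "Psi_norm (b / of_nat N) (a / of_nat N) q \<le> Psi_norm (a / of_nat N) (b / of_nat N) q"
  using Psi_norm_swap_le assms by (simp add: norm_divide divide_le_cancel)

lemma ratio_cond_iff:
  assumes N: "0 < N" and E: "tetrablock (a / of_nat N) (b / of_nat N) q"
  shows "ratio_cond N a b q l \<longleftrightarrow>
    Psi_norm (a / of_nat N) (b / of_nat N) q \<le> cmod l \<and> Psi_norm (b / of_nat N) (a / of_nat N) q \<le> cmod l"
proof -
  have E': "tetrablock (b / of_nat N) (a / of_nat N) q" using E tetrablock_commute by blast
  note ab = tetrablock_divide_norms[OF N E]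
  have "(real N * cmod (b - cnj a * q) + cmod (a * b - (of_nat N)\<^sup>2 * q)) / ((real N)\<^sup>2 - (cmod a)\<^sup>2)
      = Psi_norm (b / of_nat N) (a / of_nat N) q"
    using ratio_eq_Psi_norm_divide[OF N ab(1), where a = b and q = q] by (simp add: mult.commute)
  then show ?thesis
    unfolding ratio_cond_def using ratio_eq_Psi_norm_divide[OF N ab(2)]
      Psi_norm_divide_swap_le[OF N E] Psi_norm_divide_swap_le[OF N E']
    by (intro dominant_cond_iff) auto
qed

lemma bidisc_cond_iff:
  assumes N: "0 < N" and E: "tetrablock (a / of_nat N) (b / of_nat N) q" and l: "l \<noteq> 0"
  shows "bidisc_cond N a b q l \<longleftrightarrow>
    Psi_norm (a / of_nat N) (b / of_nat N) q \<le> cmod l \<and> Psi_norm (b / of_nat N) (a / of_nat N) q \<le> cmod l"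
proof -
  have E': "tetrablock (b / of_nat N) (a / of_nat N) q" using E tetrablock_commute by blast
  show ?thesis
    unfolding bidisc_cond_def bidisc_cond_divide[OF N]
    using nonvanishing_ball_iff_Psi_norm_le[OF tetrablock_norm_x2[OF E] l, where ?x1.0 = "a / of_nat N" and ?x3.0 = q]
      nonvanishing_ball_iff_Psi_norm_le[OF tetrablock_norm_x2[OF E'] l, where ?x1.0 = "b / of_nat N" and ?x3.0 = q]
      Psi_norm_divide_swap_le[OF N E] Psi_norm_divide_swap_le[OF N E']
    by (intro dominant_cond_iff) auto
qed

lemma quadratic_cond_iff:
  assumes N: "0 < N" and E: "tetrablock (a / of_nat N) (b / of_nat N) q"
    and l: "0 < cmod l" "cmod l < 1" and q: "cmod q \<le> cmod l"
  shows "quadratic_cond N a b q l \<longleftrightarrow>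
    Psi_norm (a / of_nat N) (b / of_nat N) q \<le> cmod l \<and> Psi_norm (b / of_nat N) (a / of_nat N) q \<le> cmod l"
proof -
  have E': "tetrablock (b / of_nat N) (a / of_nat N) q" using E tetrablock_commute by blast
  have ba: "b * a = a * b" "b / of_nat N * (a / of_nat N) = a / of_nat N * (b / of_nat N)"
    by (simp_all add: mult.commute)
  have dom: "cmod (b / of_nat N) \<le> cmod (a / of_nat N) \<longleftrightarrow> cmod b \<le> cmod a" for a b :: complex
    using N by (simp add: norm_divide divide_le_cancel)
  show ?thesis
    unfolding quadratic_cond_def
    using quadratic_cond_divide[OF N, where a = a and b = b and q = q and r = "cmod l"]
      quadratic_cond_divide[OF N, where a = b and b = a and q = q and r = "cmod l"]
      Psi_norm_le_iff_quadratic[OF tetrablock_norm_x2[OF E] _ l]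
      Psi_norm_le_iff_quadratic[OF tetrablock_norm_x2[OF E'] _ l]
      Psi_norm_divide_swap_le[OF N E] Psi_norm_divide_swap_le[OF N E'] q
    by (intro dominant_cond_iff) (auto simp: dom ba)
qed

lemma modulus_cond_iff:
  assumes N: "0 < N" and E: "tetrablock (a / of_nat N) (b / of_nat N) q" and l: "0 < cmod l"
  shows "modulus_cond N a b q l \<longleftrightarrow>
    Psi_norm (a / of_nat N) (b / of_nat N) q \<le> cmod l \<and> Psi_norm (b / of_nat N) (a / of_nat N) q \<le> cmod l"
proof -
  have E': "tetrablock (b / of_nat N) (a / of_nat N) q" using E tetrablock_commute by blast
  show ?thesis
    unfolding modulus_cond_def
    using modulus_cond_divide[OF N, where a = a and b = b and q = q and r = "cmod l"]
      modulus_cond_divide[OF N, where a = b and b = a and q = q and r = "cmod l"]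
      Psi_norm_le_iff_modulus[OF tetrablock_norm_x2[OF E] l]
      Psi_norm_le_iff_modulus[OF tetrablock_norm_x2[OF E'] l]
      Psi_norm_divide_swap_le[OF N E] Psi_norm_divide_swap_le[OF N E']
    by (intro dominant_cond_iff) auto
qed

lemma pair_conditions_at:
  assumes n: "2 \<le> n" and y: "tG n y" and l0: "l0 \<noteq> 0" "cmod l0 < 1" and j: "j \<in> {1..n div 2}"
  defines "M \<equiv> Hinf_Phi n j y \<le> cmod l0 \<and> Hinf_Phi n (n - j) y \<le> cmod l0"
  shows "(cmod (y (n - j)) \<le> cmod (y j) \<longrightarrow> Hinf_Phi n j y \<le> cmod l0) \<and>
         (cmod (y j) \<le> cmod (y (n - j)) \<longrightarrow> Hinf_Phi n (n - j) y \<le> cmod l0) \<longleftrightarrow> M"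
    and "ratio_cond (n choose j) (y j) (y (n - j)) (y n) l0 \<longleftrightarrow> M"
    and "bidisc_cond (n choose j) (y j) (y (n - j)) (y n) l0 \<longleftrightarrow> M"
    and "cmod (y n) \<le> cmod l0 \<Longrightarrow> quadratic_cond (n choose j) (y j) (y (n - j)) (y n) l0 \<longleftrightarrow> M"
    and "modulus_cond (n choose j) (y j) (y (n - j)) (y n) l0 \<longleftrightarrow> M"
    and "M \<Longrightarrow> cmod (y n) \<le> cmod l0"
proof -
  have j': "j \<in> {1..n-1}" "n - j \<in> {1..n-1}" "n - (n - j) = j" and N: "0 < n choose j"
    using j n by auto
  have E: "tetrablock (y j / of_nat (n choose j)) (y (n - j) / of_nat (n choose j)) (y n)"
    using y j' tG_iff_tetrablock[OF n] by blast
  have E': "tetrablock (y (n - j) / of_nat (n choose j)) (y j / of_nat (n choose j)) (y n)"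
    using E tetrablock_commute by blast
  have H: "Hinf_Phi n j y = Psi_norm (y j / of_nat (n choose j)) (y (n - j) / of_nat (n choose j)) (y n)"
      "Hinf_Phi n (n - j) y = Psi_norm (y (n - j) / of_nat (n choose j)) (y j / of_nat (n choose j)) (y n)"
    using Hinf_Phi_eq_Psi_norm[OF n y j'(1)] Hinf_Phi_eq_Psi_norm[OF n y j'(2)] j'(3)
    by (simp_all add: binomial_symmetric[symmetric])
  show "(cmod (y (n - j)) \<le> cmod (y j) \<longrightarrow> Hinf_Phi n j y \<le> cmod l0) \<and>
        (cmod (y j) \<le> cmod (y (n - j)) \<longrightarrow> Hinf_Phi n (n - j) y \<le> cmod l0) \<longleftrightarrow> M"
    unfolding M_def H using Psi_norm_divide_swap_le[OF N E] Psi_norm_divide_swap_le[OF N E']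
    by (intro dominant_cond_iff) auto
  show "ratio_cond (n choose j) (y j) (y (n - j)) (y n) l0 \<longleftrightarrow> M"
    unfolding M_def H by (rule ratio_cond_iff[OF N E])
  show "bidisc_cond (n choose j) (y j) (y (n - j)) (y n) l0 \<longleftrightarrow> M"
    unfolding M_def H by (rule bidisc_cond_iff[OF N E l0(1)])
  show "cmod (y n) \<le> cmod l0 \<Longrightarrow> quadratic_cond (n choose j) (y j) (y (n - j)) (y n) l0 \<longleftrightarrow> M"
    unfolding M_def H using l0 by (intro quadratic_cond_iff[OF N E]) auto
  show "modulus_cond (n choose j) (y j) (y (n - j)) (y n) l0 \<longleftrightarrow> M"
    unfolding M_def H using l0 by (intro modulus_cond_iff[OF N E]) auto
  show "M \<Longrightarrow> cmod (y n) \<le> cmod l0"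
    unfolding M_def H using norm_x3_le_Psi_norm[OF tetrablock_norm_x2[OF E]] by (meson order_trans)
qed

lemma ball_atLeastAtMost_half_iff:
  fixes n :: nat
  shows "(\<forall>k\<in>{1..n-1}. P k) \<longleftrightarrow> (\<forall>j\<in>{1..n div 2}. P j \<and> P (n - j))"
proof
  assume "\<forall>j\<in>{1..n div 2}. P j \<and> P (n - j)"
  moreover have "k \<in> {1..n div 2} \<or> n - k \<in> {1..n div 2} \<and> n - (n - k) = k" if "k \<in> {1..n-1}" for k
    using that by auto
  ultimately show "\<forall>k\<in>{1..n-1}. P k" by metis
next
  assume "\<forall>k\<in>{1..n-1}. P k"
  moreover have "j \<in> {1..n-1} \<and> n - j \<in> {1..n-1}" if "j \<in> {1..n div 2}" for j
    using that by auto
  ultimately show "\<forall>j\<in>{1..n div 2}. P j \<and> P (n - j)" by blast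
qed

lemma G_disc_iff_Hinf_Phi_le:
  assumes n: "2 \<le> n" and J: "Jn n y" and l0: "l0 \<noteq> 0" "cmod l0 < 1"
  shows "(\<exists>\<psi> :: complex \<Rightarrow> nat \<Rightarrow> complex.
        (\<forall>k\<in>{1..n}. (\<lambda>z. \<psi> z k) holomorphic_on ball 0 1) \<and>
        (\<forall>z\<in>ball 0 1. tG n (\<psi> z)) \<and> (\<forall>k\<in>{1..n}. \<psi> 0 k = 0) \<and> (\<forall>k\<in>{1..n}. \<psi> l0 k = y k))
    \<longleftrightarrow> (\<forall>k\<in>{1..n-1}. Hinf_Phi n k y \<le> cmod l0)"
proof
  assume "\<exists>\<psi> :: complex \<Rightarrow> nat \<Rightarrow> complex.
        (\<forall>k\<in>{1..n}. (\<lambda>z. \<psi> z k) holomorphic_on ball 0 1) \<and>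
        (\<forall>z\<in>ball 0 1. tG n (\<psi> z)) \<and> (\<forall>k\<in>{1..n}. \<psi> 0 k = 0) \<and> (\<forall>k\<in>{1..n}. \<psi> l0 k = y k)"
  then obtain \<psi> :: "complex \<Rightarrow> nat \<Rightarrow> complex" where \<psi>:
      "\<forall>k\<in>{1..n}. (\<lambda>z. \<psi> z k) holomorphic_on ball 0 1" "\<forall>z\<in>ball 0 1. tG n (\<psi> z)"
      "\<forall>k\<in>{1..n}. \<psi> 0 k = 0" "\<forall>k\<in>{1..n}. \<psi> l0 k = y k"
    by blast
  show "\<forall>k\<in>{1..n-1}. Hinf_Phi n k y \<le> cmod l0"
  proof
    fix k assume k: "k \<in> {1..n-1}"
    then have "Hinf_Phi n k y = Hinf_Phi n k (\<psi> l0)" using \<psi>(4) by (intro Hinf_Phi_cong) auto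
    then show "Hinf_Phi n k y \<le> cmod l0" using Hinf_Phi_le_if_G_disc[OF n l0(2) \<psi>(1-3) k] by simp
  qed
qed (rule G_disc_through_if_Hinf_Phi_le[OF n J l0])

lemma conditions_equivalent:
  fixes n :: nat and l0 :: complex and y :: "nat \<Rightarrow> complex"
  assumes n: "2 \<le> n" and l0: "l0 \<in> ball 0 1 - {0}" and J: "Jn n y"
  shows
   "((\<exists>\<psi> :: complex \<Rightarrow> nat \<Rightarrow> complex.
        (\<forall>k\<in>{1..n}. (\<lambda>z. \<psi> z k) holomorphic_on ball 0 1) \<and>
        (\<forall>z\<in>ball 0 1. tG n (\<psi> z)) \<and> (\<forall>k\<in>{1..n}. \<psi> 0 k = 0) \<and> (\<forall>k\<in>{1..n}. \<psi> l0 k = y k))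
     \<longleftrightarrow> Max ((\<lambda>j. Hinf_Phi n j y) ` {1..n-1}) \<le> norm l0)
  \<and> (Max ((\<lambda>j. Hinf_Phi n j y) ` {1..n-1}) \<le> norm l0
     \<longleftrightarrow> (\<forall>j\<in>{1..n div 2}.
           (norm (y (n - j)) \<le> norm (y j) \<longrightarrow> Hinf_Phi n j y \<le> norm l0) \<and>
           (norm (y j) \<le> norm (y (n - j)) \<longrightarrow> Hinf_Phi n (n - j) y \<le> norm l0)))
  \<and> ((\<forall>j\<in>{1..n div 2}.
           (norm (y (n - j)) \<le> norm (y j) \<longrightarrow> Hinf_Phi n j y \<le> norm l0) \<and>
           (norm (y j) \<le> norm (y (n - j)) \<longrightarrow> Hinf_Phi n (n - j) y \<le> norm l0))
     \<longleftrightarrow> (\<forall>j\<in>{1..n div 2}. ratio_cond (n choose j) (y j) (y (n - j)) (y n) l0))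
  \<and> ((\<forall>j\<in>{1..n div 2}. ratio_cond (n choose j) (y j) (y (n - j)) (y n) l0)
     \<longleftrightarrow> (\<forall>j\<in>{1..n div 2}. bidisc_cond (n choose j) (y j) (y (n - j)) (y n) l0))
  \<and> ((\<forall>j\<in>{1..n div 2}. bidisc_cond (n choose j) (y j) (y (n - j)) (y n) l0)
     \<longleftrightarrow> norm (y n) \<le> norm l0 \<and>
         (\<forall>j\<in>{1..n div 2}. quadratic_cond (n choose j) (y j) (y (n - j)) (y n) l0))
  \<and> (norm (y n) \<le> norm l0 \<and>
       (\<forall>j\<in>{1..n div 2}. quadratic_cond (n choose j) (y j) (y (n - j)) (y n) l0)
     \<longleftrightarrow> (\<forall>j\<in>{1..n div 2}. modulus_cond (n choose j) (y j) (y (n - j)) (y n) l0))"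
proof -
  have y: "tG n y" using J by (simp add: Jn_def)
  have l0': "l0 \<noteq> 0" "cmod l0 < 1" using l0 by auto
  define M where "M j \<longleftrightarrow> Hinf_Phi n j y \<le> cmod l0 \<and> Hinf_Phi n (n - j) y \<le> cmod l0" for j
  note P = pair_conditions_at[OF n y l0', folded M_def]
  have Max: "Max ((\<lambda>j. Hinf_Phi n j y) ` {1..n-1}) \<le> norm l0 \<longleftrightarrow> (\<forall>k\<in>{1..n-1}. Hinf_Phi n k y \<le> cmod l0)"
    using n by (subst Max_le_iff) auto
  have half: "(\<forall>k\<in>{1..n-1}. Hinf_Phi n k y \<le> cmod l0) \<longleftrightarrow> (\<forall>j\<in>{1..n div 2}. M j)"
    unfolding M_def by (rule ball_atLeastAtMost_half_iff)
  have "1 \<in> {1..n div 2}" using n by auto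
  then have Q: "(\<forall>j\<in>{1..n div 2}. M j) \<longleftrightarrow>
      norm (y n) \<le> norm l0 \<and> (\<forall>j\<in>{1..n div 2}. quadratic_cond (n choose j) (y j) (y (n - j)) (y n) l0)"
    using P(4,6) by blast
  show ?thesis
    using G_disc_iff_Hinf_Phi_le[OF n J l0'] Max half Q by (simp add: P(1-3,5))
qed

theorem mainTheorem13:
  fixes n :: nat and l0 :: complex and y :: "nat \<Rightarrow> complex"
  assumes hn: "n \<ge> 2"
    and hl: "l0 \<in> ball 0 1 - {0}"
    and hy: "tG n y"
    and hJ: "Jn n y \<or> n \<le> 3"
  defines "C \<equiv> \<lambda>j. real (n choose j)"
  shows
   "((\<exists>\<psi> :: complex \<Rightarrow> nat \<Rightarrow> complex.
        (\<forall>k\<in>{1..n}. (\<lambda>z. \<psi> z k) holomorphic_on ball 0 1) \<and>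
        (\<forall>z\<in>ball 0 1. tG n (\<psi> z)) \<and>
        (\<forall>k\<in>{1..n}. \<psi> 0 k = 0) \<and>
        (\<forall>k\<in>{1..n}. \<psi> l0 k = y k))
     \<longleftrightarrow> Max ((\<lambda>j. Hinf_Phi n j y) ` {1..n-1}) \<le> norm l0)
  \<and> (Max ((\<lambda>j. Hinf_Phi n j y) ` {1..n-1}) \<le> norm l0
     \<longleftrightarrow> (\<forall>j\<in>{1..n div 2}.
           (norm (y (n - j)) \<le> norm (y j) \<longrightarrow> Hinf_Phi n j y \<le> norm l0) \<and>
           (norm (y j) \<le> norm (y (n - j)) \<longrightarrow> Hinf_Phi n (n - j) y \<le> norm l0)))
  \<and> ((\<forall>j\<in>{1..n div 2}.
           (norm (y (n - j)) \<le> norm (y j) \<longrightarrow> Hinf_Phi n j y \<le> norm l0) \<and>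
           (norm (y j) \<le> norm (y (n - j)) \<longrightarrow> Hinf_Phi n (n - j) y \<le> norm l0))
     \<longleftrightarrow> (\<forall>j\<in>{1..n div 2}.
           (norm (y (n - j)) \<le> norm (y j) \<longrightarrow>
              (C j * norm (y j - cnj (y (n - j)) * y n)
                 + norm (y j * y (n - j) - (bc n j)\<^sup>2 * y n))
               / ((C j)\<^sup>2 - (norm (y (n - j)))\<^sup>2) \<le> norm l0) \<and>
           (norm (y j) \<le> norm (y (n - j)) \<longrightarrow>
              (C j * norm (y (n - j) - cnj (y j) * y n)
                 + norm (y j * y (n - j) - (bc n j)\<^sup>2 * y n))
               / ((C j)\<^sup>2 - (norm (y j))\<^sup>2) \<le> norm l0)))
  \<and> ((\<forall>j\<in>{1..n div 2}.
           (norm (y (n - j)) \<le> norm (y j) \<longrightarrow>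
              (C j * norm (y j - cnj (y (n - j)) * y n)
                 + norm (y j * y (n - j) - (bc n j)\<^sup>2 * y n))
               / ((C j)\<^sup>2 - (norm (y (n - j)))\<^sup>2) \<le> norm l0) \<and>
           (norm (y j) \<le> norm (y (n - j)) \<longrightarrow>
              (C j * norm (y (n - j) - cnj (y j) * y n)
                 + norm (y j * y (n - j) - (bc n j)\<^sup>2 * y n))
               / ((C j)\<^sup>2 - (norm (y j))\<^sup>2) \<le> norm l0))
     \<longleftrightarrow> (\<forall>j\<in>{1..n div 2}.
           (norm (y (n - j)) \<le> norm (y j) \<longrightarrow>
              (\<forall>z\<in>ball 0 1. \<forall>w\<in>ball 0 1.
                 bc n j * l0 - y j * z - y (n - j) * l0 * w + bc n j * y n * z * w \<noteq> 0)) \<and>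
           (norm (y j) \<le> norm (y (n - j)) \<longrightarrow>
              (\<forall>z\<in>ball 0 1. \<forall>w\<in>ball 0 1.
                 bc n j * l0 - y (n - j) * z - y j * l0 * w + bc n j * y n * z * w \<noteq> 0))))
  \<and> ((\<forall>j\<in>{1..n div 2}.
           (norm (y (n - j)) \<le> norm (y j) \<longrightarrow>
              (\<forall>z\<in>ball 0 1. \<forall>w\<in>ball 0 1.
                 bc n j * l0 - y j * z - y (n - j) * l0 * w + bc n j * y n * z * w \<noteq> 0)) \<and>
           (norm (y j) \<le> norm (y (n - j)) \<longrightarrow>
              (\<forall>z\<in>ball 0 1. \<forall>w\<in>ball 0 1.
                 bc n j * l0 - y (n - j) * z - y j * l0 * w + bc n j * y n * z * w \<noteq> 0)))
     \<longleftrightarrow> (norm (y n) \<le> norm l0 \<and>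
          (\<forall>j\<in>{1..n div 2}.
           (norm (y (n - j)) \<le> norm (y j) \<longrightarrow>
              (norm (y j))\<^sup>2 + (norm l0)\<^sup>2 * (norm (y (n - j)))\<^sup>2 - (C j)\<^sup>2 * (norm (y n))\<^sup>2
                + 2 * norm l0 * norm (y j * y (n - j) - (bc n j)\<^sup>2 * y n)
              \<le> (C j)\<^sup>2 * (norm l0)\<^sup>2) \<and>
           (norm (y j) \<le> norm (y (n - j)) \<longrightarrow>
              (norm (y (n - j)))\<^sup>2 + (norm l0)\<^sup>2 * (norm (y j))\<^sup>2 - (C j)\<^sup>2 * (norm (y n))\<^sup>2
                + 2 * norm l0 * norm (y j * y (n - j) - (bc n j)\<^sup>2 * y n)
              \<le> (C j)\<^sup>2 * (norm l0)\<^sup>2))))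
  \<and> ((norm (y n) \<le> norm l0 \<and>
          (\<forall>j\<in>{1..n div 2}.
           (norm (y (n - j)) \<le> norm (y j) \<longrightarrow>
              (norm (y j))\<^sup>2 + (norm l0)\<^sup>2 * (norm (y (n - j)))\<^sup>2 - (C j)\<^sup>2 * (norm (y n))\<^sup>2
                + 2 * norm l0 * norm (y j * y (n - j) - (bc n j)\<^sup>2 * y n)
              \<le> (C j)\<^sup>2 * (norm l0)\<^sup>2) \<and>
           (norm (y j) \<le> norm (y (n - j)) \<longrightarrow>
              (norm (y (n - j)))\<^sup>2 + (norm l0)\<^sup>2 * (norm (y j))\<^sup>2 - (C j)\<^sup>2 * (norm (y n))\<^sup>2
                + 2 * norm l0 * norm (y j * y (n - j) - (bc n j)\<^sup>2 * y n)
              \<le> (C j)\<^sup>2 * (norm l0)\<^sup>2)))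
     \<longleftrightarrow> (\<forall>j\<in>{1..n div 2}.
           (norm (y (n - j)) \<le> norm (y j) \<longrightarrow>
              norm (complex_of_real ((norm l0)\<^sup>2) * y (n - j) - cnj (y j) * y n)
                + norm l0 * norm (y j - cnj (y (n - j)) * y n) + C j * (norm (y n))\<^sup>2
              \<le> C j * (norm l0)\<^sup>2) \<and>
           (norm (y j) \<le> norm (y (n - j)) \<longrightarrow>
              norm (complex_of_real ((norm l0)\<^sup>2) * y j - cnj (y (n - j)) * y n)
                + norm l0 * norm (y (n - j) - cnj (y j) * y n) + C j * (norm (y n))\<^sup>2
              \<le> C j * (norm l0)\<^sup>2)))"
proof -
  have "Jn n y" using hJ Jn_if_le_3[OF hn _ hy] by blast
  with conditions_equivalent[OF hn hl] show ?thesis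
    unfolding C_def ratio_cond_def bidisc_cond_def quadratic_cond_def modulus_cond_def by simp
qed

end
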